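(* Let Assumptions (A) hold, $\ell>0$, $T>0$, $a\in\mathbb R_+$, and let $S$ be the solution of $\frac{d}{dt}S=A_\ell(S)$ with some $S(0)\in\mathbb R_+$. For $(x_0,\eta)\in\mathcal H^s\times C([0,T];\mathcal H^s)$ let $x=\mathcal J_1(x_0,\eta)$ be the solution of $x(t)=x_0+\int_0^tF(x(v))D_\ell(S(v))\,dv+\eta(t)$, and for $(\mathfrak S_0,w)\in\mathbb R_+\times C([0,T];\mathbb R)$ let $\mathfrak S=\mathcal J_2(\mathfrak S_0,w)$ be the solution of $\mathfrak S(t)=\mathfrak S_0+\int_0^t\tilde A_\ell(\mathfrak S(v))\,dv+a\,w(t)$. Then $\mathcal J_1:\mathcal H^s\times C([0,T];\mathcal H^s)\to C([0,T];\mathcal H^s)$ and $\mathcal J_2:\mathbb R_+\times C([0,T];\mathbb R)\to C([0,T];\mathbb R)$ are continuous (path spaces with the uniform topology).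
   Context: $\mathcal H$, $\mathcal C$, $\phi_j$, $\lambda_j^2$, $\mathcal H^r$ with $\|x\|_r^2=\sum_jj^{2r}\langle x,\phi_j\rangle^2$ as usual, $(\mathcal H^s)^*\cong\mathcal H^{-s}$; $F(z)=-z-\mathcal C\nabla\Psi(z)$. Assumptions (A): (1) $\lambda_j\asymp j^{-\kappa}$, $\kappa>1/2$; (2) $\Psi:\mathcal H^s\to\mathbb R$ defined everywhere, $s\in[0,\kappa-1/2)$; (3) $0\le\Psi(x)\lesssim1+\|x\|_s^2$; (4) $\|\nabla\Psi(x)\|_{-s}\lesssim1+\|x\|_s$, $\|\partial^2\Psi(x)\|_{\mathcal L(\mathcal H^s,\mathcal H^{-s})}\lesssim1$. With $\Phi$ the standard normal cdf: for $x>0$, $D_\ell(x)=2\ell^2e^{\ell^2(x-1)}\Phi(\ell(1-2x)/\sqrt{2x})$, $\Gamma_\ell(x)=D_\ell(x)+2\ell^2\Phi(-\ell/\sqrt{2x})$, $A_\ell(x)=-2xD_\ell(x)+\Gamma_\ell(x)$; at $0$ all equal $2\ell^2e^{-\ell^2}$. $\tilde A_\ell:\mathbb R\to\mathbb R$ is an extension of $A_\ell$ to the negative half-line: $\tilde A_\ell=A_\ell$ on $[0,\infty)$, $\tilde A_\ell=1$ on $(-\infty,-1/2]$, and on $(-1/2,0)$ it smoothly interpolates between these values, being strictly positive for all $x<1$ and satisfying $|\tilde A_\ell(x)-\tilde A_\ell(y)|\lesssim(1+|x|)|x-y|$. *)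

theory Defs
  imports "HOL-Probability.Probability"
begin

text \<open>Coordinates: an element x of the Hilbert space H is represented by its
coefficients (x j) = <x, phi_(j+1)> with respect to the eigenbasis of C
(index shift: Isabelle index j corresponds to paper index j+1).\<close>

type_synonym hvec = "nat \<Rightarrow> real"

definition in_Hs :: "real \<Rightarrow> hvec \<Rightarrow> bool" where
  "in_Hs r x \<longleftrightarrow> summable (\<lambda>j. real (Suc j) powr (2 * r) * (x j)\<^sup>2)"

definition hs_norm :: "real \<Rightarrow> hvec \<Rightarrow> real" where
  "hs_norm r x = sqrt (\<Sum>j. real (Suc j) powr (2 * r) * (x j)\<^sup>2)"

definition pairing :: "hvec \<Rightarrow> hvec \<Rightarrow> real" where
  "pairing g h = (\<Sum>j. g j * h j)"

definition Phi :: "real \<Rightarrow> real" where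
  "Phi x = (LINT t:{..x}|lborel. std_normal_density t)"

definition D_l :: "real \<Rightarrow> real \<Rightarrow> real" where
  "D_l l x = (if x = 0 then 2 * l\<^sup>2 * exp (- l\<^sup>2)
     else 2 * l\<^sup>2 * exp (l\<^sup>2 * (x - 1)) * Phi (l * (1 - 2 * x) / sqrt (2 * x)))"

definition Gamma_l :: "real \<Rightarrow> real \<Rightarrow> real" where
  "Gamma_l l x = (if x = 0 then 2 * l\<^sup>2 * exp (- l\<^sup>2)
     else D_l l x + 2 * l\<^sup>2 * Phi (- l / sqrt (2 * x)))"

definition A_l :: "real \<Rightarrow> real \<Rightarrow> real" where
  "A_l l x = (if x = 0 then 2 * l\<^sup>2 * exp (- l\<^sup>2)
     else - 2 * x * D_l l x + Gamma_l l x)"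

text \<open>The drift F(z) = -z - C grad Psi(z) in coordinates, where C phi_j = lambda_j^2 phi_j.\<close>
definition F_drift :: "(nat \<Rightarrow> real) \<Rightarrow> (hvec \<Rightarrow> hvec) \<Rightarrow> hvec \<Rightarrow> hvec" where
  "F_drift lam gradPsi z = (\<lambda>j. - z j - (lam j)\<^sup>2 * gradPsi z j)"

definition cont_path_Hs :: "real \<Rightarrow> real \<Rightarrow> (real \<Rightarrow> hvec) \<Rightarrow> bool" where
  "cont_path_Hs r T f \<longleftrightarrow> (\<forall>t\<in>{0..T}. in_Hs r (f t)) \<and>
     (\<forall>t\<in>{0..T}. \<forall>e>0. \<exists>d>0. \<forall>u\<in>{0..T}. \<bar>u - t\<bar> < d \<longrightarrow> hs_norm r (f u - f t) < e)"

definition sup_dist_Hs :: "real \<Rightarrow> real \<Rightarrow> (real \<Rightarrow> hvec) \<Rightarrow> (real \<Rightarrow> hvec) \<Rightarrow> real" where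
  "sup_dist_Hs r T f g = (SUP t\<in>{0..T}. hs_norm r (f t - g t))"

definition sup_dist_R :: "real \<Rightarrow> (real \<Rightarrow> real) \<Rightarrow> (real \<Rightarrow> real) \<Rightarrow> real" where
  "sup_dist_R T f g = (SUP t\<in>{0..T}. \<bar>f t - g t\<bar>)"

definition bounded_op_Hs :: "real \<Rightarrow> real \<Rightarrow> (hvec \<Rightarrow> hvec) \<Rightarrow> bool" where
  "bounded_op_Hs r K L \<longleftrightarrow>
     (\<forall>h k a b. in_Hs r h \<longrightarrow> in_Hs r k \<longrightarrow> L (\<lambda>j. a * h j + b * k j) = (\<lambda>j. a * L h j + b * L k j)) \<and>
     (\<forall>h. in_Hs r h \<longrightarrow> in_Hs (-r) (L h) \<and> hs_norm (-r) (L h) \<le> K * hs_norm r h)"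

end

theory Submission
  imports Defs "HOL-Real_Asymp.Real_Asymp"
begin

text \<open>Both maps are solution maps of integral equations x t = x0 + int_0^t g v (x v) dv + eta t in a
  Banach space, with g v Lipschitz uniformly in v. In the weighted sup norm sup_t exp(-2Lt) |x t| the
  Picard map is a contraction of ratio 1/2, which gives a solution; the same computation bounds the
  distance of two solutions by 2 exp(2LT) times the distance of their data, which gives uniqueness and
  continuity.

  For J1 one works in l2 via the isometry H^s = l2. The drift is Lipschitz there: grad Psi is Lipschitz
  from H^s to H^-s by the mean value theorem and the bound on the Hessian, and C maps H^-s boundedly
  into H^s because lambda_j^2 j^2s <= j^(2s - 2 kappa) <= j^-2s.

  For J2 the coefficient tA is only locally Lipschitz, but solutions obey a priori bounds: tA is
  bounded above, and it is positive below 1, so S - a w cannot drop below min S0 (1/2 - a sup |w|).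
  Truncating tA outside these bounds therefore changes no solution.\<close>

section \<open>Integral equations in Banach spaces\<close>

lemma exp_scaled_has_integral:
  fixes L t :: real assumes "L > 0" "t \<ge> 0"
  shows "((\<lambda>v. exp (2*L * v)) has_integral ((exp (2*L * t) - 1) / (2*L))) {0..t}"
proof -
  have "((\<lambda>v. exp (2*L * v)) has_integral ((\<lambda>v. exp (2*L * v)/(2*L)) t - (\<lambda>v. exp (2*L * v)/(2*L)) 0)) {0..t}"
    using assms
    by (intro fundamental_theorem_of_calculus)
      (auto intro!: derivative_eq_intros simp: has_real_derivative_iff_has_vector_derivative[symmetric])
  then show ?thesis by (simp add: diff_divide_distrib)
qed

lemma norm_integral_diff_le_exp:
  fixes g :: "real \<Rightarrow> 'a::banach \<Rightarrow> 'a"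
  assumes L: "L > 0" and t: "0 \<le> t"
    and lip: "\<And>v. v\<in>{0..t} \<Longrightarrow> norm (g v (p v) - g v (q v)) \<le> L * norm (p v - q v)"
    and ip: "(\<lambda>v. g v (p v)) integrable_on {0..t}"
    and iq: "(\<lambda>v. g v (q v)) integrable_on {0..t}"
    and m: "\<And>v. v\<in>{0..t} \<Longrightarrow> norm (p v - q v) \<le> m * exp (2*L * v)"
  shows "norm (integral {0..t} (\<lambda>v. g v (p v)) - integral {0..t} (\<lambda>v. g v (q v))) \<le> m * (exp (2*L * t) - 1) / 2"
proof -
  have hi: "((\<lambda>v. (L*m) * exp (2*L * v)) has_integral (L*m) * ((exp (2*L * t) - 1) / (2*L))) {0..t}"
    by (rule has_integral_mult_right, rule exp_scaled_has_integral[OF L t])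
  have "norm (integral {0..t} (\<lambda>v. g v (p v)) - integral {0..t} (\<lambda>v. g v (q v)))
      = norm (integral {0..t} (\<lambda>v. g v (p v) - g v (q v)))"
    using integral_diff[OF ip iq] by simp
  also have "\<dots> \<le> integral {0..t} (\<lambda>v. (L*m) * exp (2*L * v))"
  proof (rule integral_norm_bound_integral)
    show "(\<lambda>v. g v (p v) - g v (q v)) integrable_on {0..t}" using ip iq by (rule integrable_diff)
    show "(\<lambda>v. L * m * exp (2 * L * v)) integrable_on {0..t}" using hi by blast
    fix v assume v: "v \<in> {0..t}"
    have "norm (g v (p v) - g v (q v)) \<le> L * norm (p v - q v)" using lip[OF v] .
    also have "\<dots> \<le> L * (m * exp (2*L * v))" using m[OF v] L by (intro mult_left_mono) auto
    finally show "norm (g v (p v) - g v (q v)) \<le> L * m * exp (2 * L * v)" by simp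
  qed
  also have "\<dots> = (L*m) * ((exp (2*L * t) - 1) / (2*L))" using hi by (rule integral_unique)
  also have "\<dots> = m * (exp (2*L * t) - 1) / 2" using L by (simp add: field_simps)
  finally show ?thesis .
qed

lemma exp_neg_mult_le_half:
  fixes L s \<delta> m r :: real
  assumes L: "0 < L" and s: "0 \<le> s" and \<delta>: "0 \<le> \<delta>" and m: "0 \<le> m"
    and r: "r \<le> \<delta> + m * (exp (2*L * s) - 1) / 2"
  shows "exp (- (2*L * s)) * r \<le> \<delta> + m / 2"
proof -
  have "exp (- (2*L * s)) * r \<le> exp (- (2*L * s)) * (\<delta> + m * (exp (2*L * s) - 1) / 2)"
    using r by (intro mult_left_mono) auto
  also have "\<dots> = exp (- (2*L * s)) * \<delta> + m/2 - m/2 * exp (- (2*L * s))"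
    by (simp add: field_simps exp_minus)
  also have "\<dots> \<le> \<delta> + m/2"
  proof -
    have "exp (- (2*L * s)) * \<delta> \<le> \<delta>" using L s \<delta> by (simp add: mult_left_le_one_le)
    moreover have "0 \<le> m/2 * exp (- (2*L * s))" using m by simp
    ultimately show ?thesis by linarith
  qed
  finally show ?thesis .
qed

lemma integral_equation_stability:
  fixes g :: "real \<Rightarrow> 'a::banach \<Rightarrow> 'a"
  assumes L: "L > 0"
    and lip: "\<And>v x y. v\<in>{0..T} \<Longrightarrow> norm (g v x - g v y) \<le> L * norm (x - y)"
    and gc: "\<And>u. continuous_on {0..T} u \<Longrightarrow> continuous_on {0..T} (\<lambda>v. g v (u v))"
    and xc: "continuous_on {0..T} x"
    and xe: "\<And>t. t\<in>{0..T} \<Longrightarrow> x t = x0 + integral {0..t} (\<lambda>v. g v (x v)) + \<eta> t"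
    and yc: "continuous_on {0..T} y"
    and ye: "\<And>t. t\<in>{0..T} \<Longrightarrow> y t = y0 + integral {0..t} (\<lambda>v. g v (y v)) + \<xi> t"
    and d: "\<And>t. t\<in>{0..T} \<Longrightarrow> norm (x0 - y0 + (\<eta> t - \<xi> t)) \<le> \<delta>"
    and t: "t \<in> {0..T}"
  shows "norm (x t - y t) \<le> 2 * exp (2*L*T) * \<delta>"
proof -
  define h where "h v = exp (- (2*L * v)) * norm (x v - y v)" for v
  have bdd: "bdd_above (h ` {0..T})" unfolding h_def
    by (intro bounded_imp_bdd_above compact_imp_bounded compact_continuous_image continuous_intros xc yc compact_Icc)
  define m where "m = (SUP v\<in>{0..T}. h v)"
  have hm: "h v \<le> m" if "v \<in> {0..T}" for v unfolding m_def using bdd that by (rule cSUP_upper2) simp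
  have T0: "0 \<le> T" using t by simp
  have d0: "0 \<le> \<delta>" using d[of 0] T0 by (meson atLeastAtMost_iff norm_ge_zero order_trans order_refl)
  have m0: "0 \<le> m" using hm[of 0] T0 by (simp add: h_def order_trans[OF norm_ge_zero])
  have pm: "norm (x v - y v) \<le> m * exp (2*L * v)" if "v \<in> {0..T}" for v
  proof -
    have "norm (x v - y v) = exp (2*L * v) * h v" by (simp add: h_def exp_minus field_simps)
    also have "\<dots> \<le> exp (2*L * v) * m" using hm[OF that] by (intro mult_left_mono) auto
    finally show ?thesis by (simp add: mult.commute)
  qed
  have "h s \<le> \<delta> + m / 2" if s: "s \<in> {0..T}" for s
  proof -
    have sub: "{0..s} \<subseteq> {0..T}" using s by auto
    have ix: "(\<lambda>v. g v (x v)) integrable_on {0..s}"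
      by (rule integrable_continuous_interval, rule continuous_on_subset[OF gc[OF xc] sub])
    have iy: "(\<lambda>v. g v (y v)) integrable_on {0..s}"
      by (rule integrable_continuous_interval, rule continuous_on_subset[OF gc[OF yc] sub])
    let ?I = "integral {0..s} (\<lambda>v. g v (x v)) - integral {0..s} (\<lambda>v. g v (y v))"
    have "norm ?I \<le> m * (exp (2*L * s) - 1) / 2"
      using s sub lip pm by (intro norm_integral_diff_le_exp[where g=g and p=x and q=y, OF L _ _ ix iy]) auto
    moreover have "x s - y s = (x0 - y0 + (\<eta> s - \<xi> s)) + ?I"
      using xe[OF s] ye[OF s] by (simp add: algebra_simps)
    ultimately have "norm (x s - y s) \<le> \<delta> + m * (exp (2*L * s) - 1) / 2"
      using d[OF s] norm_triangle_ineq[of "x0 - y0 + (\<eta> s - \<xi> s)" ?I] by simp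
    then show ?thesis unfolding h_def using L s d0 m0 by (intro exp_neg_mult_le_half) auto
  qed
  then have "m \<le> \<delta> + m/2" unfolding m_def using T0 by (intro cSUP_least) (auto simp: m_def)
  then have m2: "m \<le> 2 * \<delta>" by simp
  have "norm (x t - y t) \<le> m * exp (2*L * t)" using pm[OF t] .
  also have "\<dots> \<le> 2 * \<delta> * exp (2*L*T)" using m2 m0 t L by (intro mult_mono) auto
  finally show ?thesis by (simp add: mult_ac)
qed

text \<open>The Picard map of the equation \<open>x t = x0 + integral {0..t} (\<lambda>v. g v (x v)) + \<eta> t\<close>, conjugated by
  \<open>y \<mapsto> (\<lambda>t. exp (2 * L * t) *\<^sub>R y t)\<close>: in the plain sup norm it is a contraction of ratio 1/2.\<close>

definition bielecki_picard ::
    "real \<Rightarrow> (real \<Rightarrow> 'a::banach \<Rightarrow> 'a) \<Rightarrow> 'a \<Rightarrow> (real \<Rightarrow> 'a) \<Rightarrow> (real \<Rightarrow> 'a) \<Rightarrow> real \<Rightarrow> 'a" where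
  "bielecki_picard L g x0 \<eta> y t =
     exp (- (2*L * t)) *\<^sub>R (x0 + integral {0..t} (\<lambda>v. g v (exp (2*L * v) *\<^sub>R y v)) + \<eta> t)"

lemma continuous_on_bielecki_picard:
  assumes gc: "\<And>u. continuous_on {0..T} u \<Longrightarrow> continuous_on {0..T} (\<lambda>v. g v (u v))"
    and ec: "continuous_on {0..T} \<eta>" and yc: "continuous_on {0..T} y"
  shows "continuous_on {0..T} (bielecki_picard L g x0 \<eta> y)"
proof -
  have "continuous_on {0..T} (\<lambda>t. integral {0..t} (\<lambda>v. g v (exp (2*L * v) *\<^sub>R y v)))"
    by (intro indefinite_integral_continuous_1 integrable_continuous_interval gc continuous_intros yc)
  then show ?thesis unfolding bielecki_picard_def by (intro continuous_intros ec)
qed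

lemma norm_bielecki_picard_diff_le:
  fixes g :: "real \<Rightarrow> 'a::banach \<Rightarrow> 'a"
  assumes L: "L > 0"
    and lip: "\<And>v x y. v\<in>{0..T} \<Longrightarrow> norm (g v x - g v y) \<le> L * norm (x - y)"
    and gc: "\<And>u. continuous_on {0..T} u \<Longrightarrow> continuous_on {0..T} (\<lambda>v. g v (u v))"
    and yc: "continuous_on {0..T} y" and zc: "continuous_on {0..T} z"
    and yz: "\<And>v. v \<in> {0..T} \<Longrightarrow> norm (y v - z v) \<le> d" and c: "c \<in> {0..T}"
  shows "norm (bielecki_picard L g x0 \<eta> y c - bielecki_picard L g x0 \<eta> z c) \<le> d / 2"
proof -
  define p where "p v = exp (2*L * v) *\<^sub>R y v" for v
  define q where "q v = exp (2*L * v) *\<^sub>R z v" for v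
  have sub: "{0..c} \<subseteq> {0..T}" using c by auto
  have ip: "(\<lambda>v. g v (p v)) integrable_on {0..c}" and iq: "(\<lambda>v. g v (q v)) integrable_on {0..c}"
    unfolding p_def q_def using sub
    by (auto intro!: integrable_continuous_interval continuous_on_subset[OF gc] continuous_intros yc zc)
  have d0: "0 \<le> d" using yz[OF c] by (simp add: order_trans[OF norm_ge_zero])
  have "norm (p v - q v) \<le> d * exp (2*L * v)" if "v \<in> {0..T}" for v
    using mult_left_mono[OF yz[OF that], of "exp (2*L * v)"]
    unfolding p_def q_def by (simp add: scaleR_diff_right[symmetric] mult.commute)
  then have "norm (integral {0..c} (\<lambda>v. g v (p v)) - integral {0..c} (\<lambda>v. g v (q v))) \<le> d * (exp (2*L * c) - 1) / 2"
    using c sub lip by (intro norm_integral_diff_le_exp[where g=g and p=p and q=q, OF L _ _ ip iq]) auto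
  then have "exp (- (2*L * c)) * norm (integral {0..c} (\<lambda>v. g v (p v)) - integral {0..c} (\<lambda>v. g v (q v))) \<le> 0 + d / 2"
    using L c d0 by (intro exp_neg_mult_le_half) auto
  then show ?thesis unfolding bielecki_picard_def p_def q_def by (simp add: scaleR_diff_right[symmetric])
qed

lemma integral_equation_exists:
  fixes g :: "real \<Rightarrow> 'a::banach \<Rightarrow> 'a"
  assumes L: "L > 0" and T: "0 \<le> T"
    and lip: "\<And>v x y. v\<in>{0..T} \<Longrightarrow> norm (g v x - g v y) \<le> L * norm (x - y)"
    and gc: "\<And>u. continuous_on {0..T} u \<Longrightarrow> continuous_on {0..T} (\<lambda>v. g v (u v))"
    and ec: "continuous_on {0..T} \<eta>"
  shows "\<exists>x. continuous_on {0..T} x \<and> (\<forall>t\<in>{0..T}. x t = x0 + integral {0..t} (\<lambda>v. g v (x v)) + \<eta> t)"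
proof -
  let ?P = "bielecki_picard L g x0 \<eta>"
  \<comment> \<open>paths are extended constantly outside [0, T] to live in the Banach space of bounded continuous functions\<close>
  have "\<exists>h :: real \<Rightarrow>\<^sub>C 'a. \<forall>t. h t = ?P y (clamp 0 T t)" for y :: "real \<Rightarrow>\<^sub>C 'a"
  proof -
    have "continuous_on (cbox 0 T) (?P y)"
      using continuous_on_bielecki_picard[OF gc ec continuous_on_apply_bcontfun] by (simp add: cbox_interval)
    then obtain h :: "real \<Rightarrow>\<^sub>C 'a" where "\<And>t. h t = ?P y (clamp 0 T t)"
      by (rule continuous_on_cbox_bcontfunE) blast
    then show ?thesis by blast
  qed
  then obtain \<Phi> :: "(real \<Rightarrow>\<^sub>C 'a) \<Rightarrow> (real \<Rightarrow>\<^sub>C 'a)" where \<Phi>: "\<And>y t. \<Phi> y t = ?P y (clamp 0 T t)"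
    by metis
  have clamp: "clamp 0 T t \<in> {0..T}" for t using clamp_in_interval[of 0 T t] T by (simp add: cbox_interval)
  have "dist (\<Phi> y) (\<Phi> z) \<le> (1/2) * dist y z" for y z
  proof (rule dist_bound)
    fix t
    have "norm (?P y (clamp 0 T t) - ?P z (clamp 0 T t)) \<le> dist y z / 2"
      using dist_bounded[of y _ z] clamp
      by (intro norm_bielecki_picard_diff_le[OF L lip gc]) (auto simp: dist_norm)
    then show "dist (\<Phi> y t) (\<Phi> z t) \<le> (1/2) * dist y z" by (simp add: \<Phi> dist_norm)
  qed
  then obtain y where y: "\<Phi> y = y" using banach_fix_type[of "1/2" \<Phi>] by auto
  define x where "x t = exp (2*L * t) *\<^sub>R y t" for t
  have "x t = x0 + integral {0..t} (\<lambda>v. g v (x v)) + \<eta> t" if t: "t \<in> {0..T}" for t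
  proof -
    have "clamp 0 T t = t" using t by (simp add: cbox_interval)
    then have "y t = ?P y t" using \<Phi>[of y t] y by simp
    then show ?thesis unfolding x_def bielecki_picard_def by (simp add: exp_minus)
  qed
  moreover have "continuous_on {0..T} x" unfolding x_def by (intro continuous_intros) simp
  ultimately show ?thesis by blast
qed

lemma eps_delta_of_linear_bound:
  fixes d D :: "'a \<Rightarrow> 'b \<Rightarrow> real"
  assumes C: "0 < C" and bound: "\<And>x y. P x \<Longrightarrow> Q y \<Longrightarrow> d x y < 1 \<Longrightarrow> D x y \<le> C * d x y"
  shows "\<forall>e>0. \<exists>\<delta>>0. \<forall>x y. P x \<and> Q y \<and> d x y < \<delta> \<longrightarrow> D x y < e"
proof (intro allI impI)
  fix e :: real assume e: "0 < e"
  show "\<exists>\<delta>>0. \<forall>x y. P x \<and> Q y \<and> d x y < \<delta> \<longrightarrow> D x y < e"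
  proof (intro exI[of _ "min 1 (e / C)"] conjI allI impI)
    show "0 < min 1 (e / C)" using e C by simp
    fix x y assume xy: "P x \<and> Q y \<and> d x y < min 1 (e / C)"
    then have "D x y \<le> C * d x y" using bound by simp
    also have "\<dots> < C * (e / C)" using xy C by (intro mult_strict_left_mono) auto
    finally show "D x y < e" using C by simp
  qed
qed

section \<open>The standard normal distribution function and the coefficients D_l, A_l\<close>

definition std_normal_measure :: "real measure" where
  "std_normal_measure = density lborel std_normal_density"

lemma real_distribution_std_normal_measure: "real_distribution std_normal_measure"
  unfolding real_distribution_def real_distribution_axioms_def std_normal_measure_def
  by (intro conjI prob_space_normal_density) (simp_all add: sets_lborel)

lemma Phi_eq_cdf: "Phi x = cdf std_normal_measure x"
proof -
  have "cdf std_normal_measure x = measure std_normal_measure {..x}" by (simp add: cdf_def)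
  also have "\<dots> = enn2real (\<integral>\<^sup>+ t. ennreal (std_normal_density t) * indicator {..x} t \<partial>lborel)"
    unfolding std_normal_measure_def measure_def by (simp add: emeasure_density)
  also have "\<dots> = enn2real (\<integral>\<^sup>+ t. ennreal (indicator {..x} t * std_normal_density t) \<partial>lborel)"
    by (simp add: ennreal_mult'' mult.commute ennreal_indicator)
  also have "\<dots> = (\<integral> t. indicator {..x} t * std_normal_density t \<partial>lborel)"
  proof (subst nn_integral_eq_integral)
    show "integrable lborel (\<lambda>t. indicator {..x} t * std_normal_density t)"
      using integrable_mult_indicator[of "{..x}" lborel std_normal_density] by simp
  qed auto
  also have "\<dots> = Phi x" unfolding Phi_def set_lebesgue_integral_def by simp
  finally show ?thesis by simp
qed

lemma Phi_nonneg: "0 \<le> Phi x"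
  unfolding Phi_eq_cdf
  by (rule finite_borel_measure.cdf_nonneg[OF real_distribution.finite_borel_measure_M
        [OF real_distribution_std_normal_measure]])

lemma Phi_le_1: "Phi x \<le> 1"
  unfolding Phi_eq_cdf by (rule real_distribution.cdf_bounded_prob[OF real_distribution_std_normal_measure])

lemma Phi_tendsto_at_top: "(Phi \<longlongrightarrow> 1) at_top"
  unfolding Phi_eq_cdf[abs_def]
  by (rule real_distribution.cdf_lim_at_top_prob[OF real_distribution_std_normal_measure])

lemma isCont_Phi: "isCont Phi x"
proof -
  have "measure std_normal_measure {x} = 0"
    unfolding std_normal_measure_def measure_def by (simp add: emeasure_density nn_integral_null_set)
  then show ?thesis
    unfolding Phi_eq_cdf[abs_def]
    using finite_borel_measure.isCont_cdf[OF real_distribution.finite_borel_measure_M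
        [OF real_distribution_std_normal_measure]] by simp
qed

lemma D_l_nonneg: "0 \<le> D_l l x"
  unfolding D_l_def by (auto intro!: mult_nonneg_nonneg Phi_nonneg)

lemma continuous_on_D_l:
  fixes l :: real assumes l: "l > 0"
  shows "continuous_on {0..} (D_l l)"
proof -
  define f where "f x = 2 * l\<^sup>2 * exp (l\<^sup>2 * (x - 1)) * Phi (l * (1 - 2 * x) / sqrt (2 * x))" for x
  have eqf: "D_l l x = f x" if "x \<noteq> 0" for x using that unfolding D_l_def f_def by simp
  have "continuous (at x within {0..}) (D_l l)" if x: "x \<in> {0..}" for x
  proof (cases "x = 0")
    case False
    then have xp: "x > 0" using x by simp
    have "isCont f x" unfolding f_def using xp
      by (intro continuous_intros isCont_o2[OF _ isCont_Phi]) auto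
    moreover have "\<forall>\<^sub>F y in nhds x. D_l l y = f y"
      using eventually_nhds_in_open[of "{0<..}" x] xp by (auto elim!: eventually_mono intro: eqf)
    ultimately have "isCont (D_l l) x" using isCont_cong[of "D_l l" f x] by (simp add: eqf xp)
    then show ?thesis by (rule continuous_within_subset) simp
  next
    case True
    have "filterlim (\<lambda>x. l * (1 - 2 * x) / sqrt (2 * x)) at_top (at_right 0)"
      using l by real_asymp
    then have "(f \<longlongrightarrow> 2 * l\<^sup>2 * exp (l\<^sup>2 * (0 - 1)) * 1) (at_right 0)"
      unfolding f_def by (intro tendsto_intros filterlim_compose[OF Phi_tendsto_at_top])
    moreover have "\<forall>\<^sub>F x in at_right 0. D_l l x = f x" by (simp add: eventually_at_filter eqf)
    moreover have "D_l l 0 = 2 * l\<^sup>2 * exp (l\<^sup>2 * (0 - 1)) * 1" by (simp add: D_l_def)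
    ultimately have "(D_l l \<longlongrightarrow> D_l l 0) (at_right 0)" using tendsto_cong by metis
    then show ?thesis using True by (simp add: continuous_within at_within_Ici_at_right)
  qed
  then show ?thesis by (simp add: continuous_on_eq_continuous_within)
qed

lemma A_l_le:
  assumes "x \<ge> 1/2"
  shows "A_l l x \<le> 2 * l\<^sup>2"
proof -
  have "A_l l x = (1 - 2 * x) * D_l l x + 2 * l\<^sup>2 * Phi (- l / sqrt (2 * x))"
    unfolding A_l_def Gamma_l_def using assms by (simp add: algebra_simps)
  also have "(1 - 2 * x) * D_l l x \<le> 0" using assms D_l_nonneg[of l x] by (simp add: mult_nonpos_nonneg)
  also have "2 * l\<^sup>2 * Phi (- l / sqrt (2 * x)) \<le> 2 * l\<^sup>2" using Phi_le_1 by (simp add: mult_left_le)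
  finally show ?thesis by simp
qed

section \<open>The sequence space l2\<close>

lemma summable_square_add:
  fixes x y :: "nat \<Rightarrow> real"
  assumes "summable (\<lambda>j. (x j)\<^sup>2)" "summable (\<lambda>j. (y j)\<^sup>2)"
  shows "summable (\<lambda>j. (x j + y j)\<^sup>2)"
proof (rule summable_comparison_test'[where g="\<lambda>j. 2 * (x j)\<^sup>2 + 2 * (y j)\<^sup>2" and N=0])
  show "summable (\<lambda>j. 2 * (x j)\<^sup>2 + 2 * (y j)\<^sup>2)" using assms by (intro summable_add summable_mult)
  fix n show "norm ((x n + y n)\<^sup>2) \<le> 2 * (x n)\<^sup>2 + 2 * (y n)\<^sup>2"
  proof -
    have h: "0 \<le> (x n - y n)^2" by simp
    have "norm ((x n + y n)\<^sup>2) = (x n + y n)\<^sup>2" by simp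
    also have "\<dots> \<le> 2 * (x n)\<^sup>2 + 2 * (y n)\<^sup>2" using h by (simp add: power2_eq_square algebra_simps)
    finally show ?thesis .
  qed
qed

lemma summable_mult_of_squares:
  fixes x y :: "nat \<Rightarrow> real"
  assumes "summable (\<lambda>j. (x j)\<^sup>2)" "summable (\<lambda>j. (y j)\<^sup>2)"
  shows "summable (\<lambda>j. x j * y j)"
proof (rule summable_comparison_test'[where g="\<lambda>j. (x j)\<^sup>2 + (y j)\<^sup>2" and N=0])
  show "summable (\<lambda>j. (x j)\<^sup>2 + (y j)\<^sup>2)" using assms by (intro summable_add)
  fix n show "norm (x n * y n) \<le> (x n)\<^sup>2 + (y n)\<^sup>2"
  proof -
    have "0 \<le> (\<bar>x n\<bar> - \<bar>y n\<bar>)^2" by simp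
    also have "\<dots> = (x n)^2 - 2 * (\<bar>x n\<bar> * \<bar>y n\<bar>) + (y n)^2" by (simp add: power2_diff)
    finally have a: "2 * (\<bar>x n\<bar> * \<bar>y n\<bar>) \<le> (x n)^2 + (y n)^2" by simp
    have b: "0 \<le> \<bar>x n\<bar> * \<bar>y n\<bar>" by simp
    have "norm (x n * y n) = \<bar>x n\<bar> * \<bar>y n\<bar>" by (simp add: abs_mult)
    then show ?thesis using a b by linarith
  qed
qed

lemma summable_square_scale:
  fixes x :: "nat \<Rightarrow> real"
  assumes "summable (\<lambda>j. (x j)\<^sup>2)"
  shows "summable (\<lambda>j. (c * x j)\<^sup>2)"
  using summable_mult[OF assms, of "c^2"] by (simp add: power_mult_distrib)

typedef l2 = "{x::nat \<Rightarrow> real. summable (\<lambda>j. (x j)\<^sup>2)}" morphisms l2_rep Abs_l2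
  by (rule exI[of _ "\<lambda>_. 0"]) simp

setup_lifting type_definition_l2

lemma summable_l2_rep_square: "summable (\<lambda>j. (l2_rep u j)\<^sup>2)"
  using l2_rep[of u] by simp

instantiation l2 :: real_vector
begin
lift_definition zero_l2 :: l2 is "\<lambda>_. 0" by simp
lift_definition plus_l2 :: "l2 \<Rightarrow> l2 \<Rightarrow> l2" is "\<lambda>x y j. x j + y j" by (rule summable_square_add)
lift_definition minus_l2 :: "l2 \<Rightarrow> l2 \<Rightarrow> l2" is "\<lambda>x y j. x j - y j"
  using summable_square_add[of _ "\<lambda>j. - _ j"] by simp
lift_definition uminus_l2 :: "l2 \<Rightarrow> l2" is "\<lambda>x j. - x j" by simp
lift_definition scaleR_l2 :: "real \<Rightarrow> l2 \<Rightarrow> l2" is "\<lambda>c x j. c * x j" by (rule summable_square_scale)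
instance
  by standard (transfer; auto simp: algebra_simps)+
end

lemma l2_rep_zero[simp]: "l2_rep 0 j = 0" by transfer simp
lemma l2_rep_plus[simp]: "l2_rep (u + v) j = l2_rep u j + l2_rep v j" by transfer simp
lemma l2_rep_minus[simp]: "l2_rep (u - v) j = l2_rep u j - l2_rep v j" by transfer simp
lemma l2_rep_uminus[simp]: "l2_rep (- u) j = - l2_rep u j" by transfer simp
lemma l2_rep_scaleR[simp]: "l2_rep (c *\<^sub>R u) j = c * l2_rep u j" by transfer simp

instantiation l2 :: real_inner
begin
definition inner_l2 :: "l2 \<Rightarrow> l2 \<Rightarrow> real" where
  "inner_l2 u v = (\<Sum>j. l2_rep u j * l2_rep v j)"
definition norm_l2 :: "l2 \<Rightarrow> real" where
  "norm_l2 u = sqrt (\<Sum>j. (l2_rep u j)\<^sup>2)"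
definition sgn_l2 :: "l2 \<Rightarrow> l2" where
  "sgn_l2 u = u /\<^sub>R norm u"
definition dist_l2 :: "l2 \<Rightarrow> l2 \<Rightarrow> real" where
  "dist_l2 u v = norm (u - v)"
definition uniformity_l2 :: "(l2 \<times> l2) filter" where
  "uniformity_l2 = (INF e\<in>{0 <..}. principal {(x, y). dist x y < e})"
definition open_l2 :: "l2 set \<Rightarrow> bool" where
  "open_l2 U = (\<forall>x\<in>U. \<forall>\<^sub>F (x', y) in uniformity. x' = x \<longrightarrow> y \<in> U)"
lemma summable_l2_rep_mult: "summable (\<lambda>j. l2_rep u j * l2_rep v j)"
  by (rule summable_mult_of_squares[OF summable_l2_rep_square summable_l2_rep_square])
instance
proof
  fix x y z :: l2 and r :: real
  show "inner x y = inner y x" unfolding inner_l2_def by (simp add: mult.commute)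
  show "inner (x + y) z = inner x z + inner y z" unfolding inner_l2_def
    by (simp add: distrib_right suminf_add[OF summable_l2_rep_mult summable_l2_rep_mult])
  show "inner (r *\<^sub>R x) y = r * inner x y" unfolding inner_l2_def
    using suminf_mult[OF summable_l2_rep_mult, of r x y] by (simp add: mult.assoc)
  show "0 \<le> inner x x" unfolding inner_l2_def by (intro suminf_nonneg summable_l2_rep_mult) simp
  show "inner x x = 0 \<longleftrightarrow> x = 0"
  proof -
    have "inner x x = 0 \<longleftrightarrow> (\<forall>j. l2_rep x j * l2_rep x j = 0)"
      unfolding inner_l2_def by (rule suminf_eq_zero_iff[OF summable_l2_rep_mult]) simp
    also have "\<dots> \<longleftrightarrow> x = 0" by (auto simp: l2_rep_inject[symmetric] fun_eq_iff)
    finally show ?thesis .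
  qed
  show "norm x = sqrt (inner x x)" unfolding norm_l2_def inner_l2_def by (simp add: power2_eq_square)
qed (simp_all add: sgn_l2_def dist_l2_def uniformity_l2_def open_l2_def)
end

lemma norm_l2_power2: "(norm u)\<^sup>2 = (\<Sum>j. (l2_rep u j)\<^sup>2)"
  unfolding norm_l2_def by (simp add: suminf_nonneg summable_l2_rep_square)

lemma sum_l2_rep_square_le: "(\<Sum>j<K. (l2_rep u j)\<^sup>2) \<le> (norm u)\<^sup>2"
  unfolding norm_l2_power2 by (rule sum_le_suminf[OF summable_l2_rep_square]) auto

lemma abs_l2_rep_le_norm: "\<bar>l2_rep u j\<bar> \<le> norm u"
proof -
  have "(l2_rep u j)\<^sup>2 \<le> (norm u)\<^sup>2"
    using sum_l2_rep_square_le[of u "Suc j"] sum_le_suminf[OF summable_l2_rep_square, of "{j}" u] unfolding norm_l2_power2 by simp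
  then show ?thesis using abs_le_square_iff[of "l2_rep u j" "norm u"] by simp
qed

lemma bounded_linear_l2_rep: "bounded_linear (\<lambda>u. l2_rep u j)"
  by (rule bounded_linear_intro[where K=1]) (auto simp: abs_l2_rep_le_norm)

lemma l2_rep_tail_le:
  fixes X :: "nat \<Rightarrow> l2"
  assumes lim: "\<And>j. (\<lambda>n. l2_rep (X n) j) \<longlonglongrightarrow> x j"
    and e: "0 < e" and n: "\<And>m. m \<ge> n \<Longrightarrow> dist (X n) (X m) < e"
  shows "summable (\<lambda>j. (l2_rep (X n) j - x j)\<^sup>2)" and "(\<Sum>j. (l2_rep (X n) j - x j)\<^sup>2) \<le> e\<^sup>2"
proof -
  have partial: "(\<Sum>j<K. (l2_rep (X n) j - x j)\<^sup>2) \<le> e\<^sup>2" for K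
  proof (rule LIMSEQ_le_const2)
    show "(\<lambda>m. \<Sum>j<K. (l2_rep (X n) j - l2_rep (X (m + n)) j)\<^sup>2) \<longlonglongrightarrow> (\<Sum>j<K. (l2_rep (X n) j - x j)\<^sup>2)"
      by (intro tendsto_intros LIMSEQ_ignore_initial_segment lim)
    show "\<exists>N. \<forall>m\<ge>N. (\<Sum>j<K. (l2_rep (X n) j - l2_rep (X (m + n)) j)\<^sup>2) \<le> e\<^sup>2"
    proof (intro exI allI impI)
      fix m
      have "(\<Sum>j<K. (l2_rep (X n) j - l2_rep (X (m + n)) j)\<^sup>2) \<le> (norm (X n - X (m + n)))\<^sup>2"
        using sum_l2_rep_square_le[of "X n - X (m + n)" K] by simp
      also have "\<dots> \<le> e\<^sup>2" using n[of "m + n"] e by (intro power_mono) (auto simp: dist_norm)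
      finally show "(\<Sum>j<K. (l2_rep (X n) j - l2_rep (X (m + n)) j)\<^sup>2) \<le> e\<^sup>2" .
    qed
  qed
  show summable: "summable (\<lambda>j. (l2_rep (X n) j - x j)\<^sup>2)"
    using partial[of "Suc K" for K] by (intro bounded_imp_summable[where B="e\<^sup>2"]) (auto simp: lessThan_Suc_atMost)
  show "(\<Sum>j. (l2_rep (X n) j - x j)\<^sup>2) \<le> e\<^sup>2"
    using summable partial by (intro suminf_le_const)
qed

instance l2 :: complete_space
proof
  fix X :: "nat \<Rightarrow> l2" assume X: "Cauchy X"
  define x where "x j = lim (\<lambda>n. l2_rep (X n) j)" for j
  have lim: "(\<lambda>n. l2_rep (X n) j) \<longlonglongrightarrow> x j" for j
    using bounded_linear.Cauchy[OF bounded_linear_l2_rep X] unfolding x_def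
    by (simp add: Cauchy_convergent_iff convergent_LIMSEQ_iff)
  obtain N where "\<And>m n. m \<ge> N \<Longrightarrow> n \<ge> N \<Longrightarrow> dist (X m) (X n) < 1" using metric_CauchyD[OF X, of 1] by auto
  then have "summable (\<lambda>j. (l2_rep (X N) j - x j)\<^sup>2)" by (intro l2_rep_tail_le(1)[OF lim]) auto
  then have "summable (\<lambda>j. (x j)\<^sup>2)"
    using summable_square_add[OF summable_l2_rep_square[of "X N"] summable_square_scale[of _ "-1"],
        of "\<lambda>j. l2_rep (X N) j - x j"] by simp
  then have rep_x: "l2_rep (Abs_l2 x) = x" by (simp add: Abs_l2_inverse)
  have "X \<longlonglongrightarrow> Abs_l2 x"
  proof (rule metric_LIMSEQ_I)
    fix r :: real assume r: "r > 0"
    obtain M where M: "\<And>m n. m \<ge> M \<Longrightarrow> n \<ge> M \<Longrightarrow> dist (X m) (X n) < r/2"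
      using metric_CauchyD[OF X, of "r/2"] r by auto
    show "\<exists>no. \<forall>n\<ge>no. dist (X n) (Abs_l2 x) < r"
    proof (intro exI allI impI)
      fix n assume n: "n \<ge> M"
      have "(norm (X n - Abs_l2 x))\<^sup>2 \<le> (r/2)\<^sup>2"
        using l2_rep_tail_le(2)[OF lim, of "r/2" n] M n r unfolding norm_l2_power2 by (simp add: rep_x)
      then have "norm (X n - Abs_l2 x) \<le> r/2" using r by (simp add: power2_le_iff_abs_le)
      then show "dist (X n) (Abs_l2 x) < r" using r by (simp add: dist_norm)
    qed
  qed
  then show "convergent X" by (auto simp: convergent_def)
qed

instance l2 :: banach ..

lemma norm_l2_le_coordinatewise:
  assumes c: "0 \<le> c" and h: "\<And>j. \<bar>l2_rep a j\<bar> \<le> c * \<bar>l2_rep b j\<bar>"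
  shows "norm a \<le> c * norm b"
proof -
  have "(norm a)\<^sup>2 = (\<Sum>j. (l2_rep a j)\<^sup>2)" by (rule norm_l2_power2)
  also have "\<dots> \<le> (\<Sum>j. c\<^sup>2 * (l2_rep b j)\<^sup>2)"
  proof (rule suminf_le)
    fix j
    have "\<bar>l2_rep a j\<bar>\<^sup>2 \<le> (c * \<bar>l2_rep b j\<bar>)\<^sup>2" using h[of j] abs_ge_zero by (rule power_mono)
    then show "(l2_rep a j)\<^sup>2 \<le> c\<^sup>2 * (l2_rep b j)\<^sup>2" by (simp add: power_mult_distrib)
  qed (rule summable_l2_rep_square, rule summable_mult[OF summable_l2_rep_square])
  also have "\<dots> = c\<^sup>2 * (\<Sum>j. (l2_rep b j)\<^sup>2)" by (rule suminf_mult[OF summable_l2_rep_square])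
  also have "\<dots> = (c * norm b)\<^sup>2" by (simp only: norm_l2_power2[symmetric] power_mult_distrib)
  finally have "(norm a)\<^sup>2 \<le> (c * norm b)\<^sup>2" .
  then show ?thesis by (rule power2_le_imp_le) (use c in simp)
qed

section \<open>The Sobolev scale H^r as a weighted l2\<close>

definition sobolev_weight :: "real \<Rightarrow> nat \<Rightarrow> real" where
  "sobolev_weight r j = real (Suc j) powr r"

lemma sobolev_weight_pos [simp]: "0 < sobolev_weight r j"
  by (simp add: sobolev_weight_def)

lemma sobolev_weight_neq_0 [simp]: "sobolev_weight r j \<noteq> 0"
  by (simp add: sobolev_weight_def)

lemma sobolev_weight_power2: "(sobolev_weight r j)\<^sup>2 = real (Suc j) powr (2 * r)"
  unfolding sobolev_weight_def by (simp add: power2_eq_square powr_add[symmetric])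

lemma sobolev_weight_minus_mult: "sobolev_weight (-r) j * sobolev_weight r j = 1"
  unfolding sobolev_weight_def by (simp add: powr_add[symmetric])

lemma in_Hs_iff: "in_Hs r x \<longleftrightarrow> summable (\<lambda>j. (sobolev_weight r j * x j)\<^sup>2)"
  unfolding in_Hs_def by (simp add: power_mult_distrib sobolev_weight_power2)

definition to_l2 :: "real \<Rightarrow> hvec \<Rightarrow> l2" where
  "to_l2 r x = Abs_l2 (\<lambda>j. sobolev_weight r j * x j)"

definition of_l2 :: "real \<Rightarrow> l2 \<Rightarrow> hvec" where
  "of_l2 r u = (\<lambda>j. sobolev_weight (-r) j * l2_rep u j)"

lemma l2_rep_to_l2: "in_Hs r x \<Longrightarrow> l2_rep (to_l2 r x) j = sobolev_weight r j * x j"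
  unfolding to_l2_def by (subst Abs_l2_inverse) (auto simp: in_Hs_iff)

lemma hs_norm_eq_norm_to_l2: "in_Hs r x \<Longrightarrow> hs_norm r x = norm (to_l2 r x)"
  unfolding hs_norm_def norm_l2_def by (simp add: l2_rep_to_l2 power_mult_distrib sobolev_weight_power2)

lemma sobolev_weight_mult_of_l2: "sobolev_weight r j * of_l2 r u j = l2_rep u j"
  unfolding of_l2_def
  by (simp add: mult.assoc[symmetric] mult.commute[of "sobolev_weight r j"] sobolev_weight_minus_mult)

lemma in_Hs_of_l2: "in_Hs r (of_l2 r u)"
  unfolding in_Hs_iff using summable_l2_rep_square[of u] by (simp only: sobolev_weight_mult_of_l2)

lemma to_l2_of_l2 [simp]: "to_l2 r (of_l2 r u) = u"
  by (rule l2_rep_inject[THEN iffD1])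
    (simp add: fun_eq_iff l2_rep_to_l2 in_Hs_of_l2 sobolev_weight_mult_of_l2)

lemma of_l2_to_l2: "in_Hs r x \<Longrightarrow> of_l2 r (to_l2 r x) = x"
  unfolding of_l2_def by (simp add: fun_eq_iff l2_rep_to_l2 mult.assoc[symmetric] sobolev_weight_minus_mult)

lemma in_Hs_lincomb: "in_Hs r x \<Longrightarrow> in_Hs r y \<Longrightarrow> in_Hs r (\<lambda>j. a * x j + b * y j)"
  unfolding in_Hs_iff
  using summable_square_add[OF summable_square_scale[of "\<lambda>j. sobolev_weight r j * x j" a]
      summable_square_scale[of "\<lambda>j. sobolev_weight r j * y j" b]]
  by (simp add: algebra_simps)

lemma in_Hs_diff: "in_Hs r x \<Longrightarrow> in_Hs r y \<Longrightarrow> in_Hs r (x - y)"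
  using in_Hs_lincomb[of r x y 1 "-1"] by (simp add: fun_diff_def)

lemma in_Hs_scale: "in_Hs r x \<Longrightarrow> in_Hs r (\<lambda>j. c * x j)"
  using in_Hs_lincomb[of r x x c 0] by simp

lemma to_l2_lincomb:
  "in_Hs r x \<Longrightarrow> in_Hs r y \<Longrightarrow> to_l2 r (\<lambda>j. a * x j + b * y j) = a *\<^sub>R to_l2 r x + b *\<^sub>R to_l2 r y"
  by (rule l2_rep_inject[THEN iffD1]) (simp add: fun_eq_iff l2_rep_to_l2 in_Hs_lincomb algebra_simps)

lemma to_l2_diff: "in_Hs r x \<Longrightarrow> in_Hs r y \<Longrightarrow> to_l2 r (x - y) = to_l2 r x - to_l2 r y"
  by (rule l2_rep_inject[THEN iffD1]) (simp add: fun_eq_iff l2_rep_to_l2 in_Hs_diff algebra_simps)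

lemma to_l2_scale: "in_Hs r x \<Longrightarrow> to_l2 r (\<lambda>j. c * x j) = c *\<^sub>R to_l2 r x"
  using to_l2_lincomb[of r x x c 0] by simp

lemma hs_norm_diff: "in_Hs r x \<Longrightarrow> in_Hs r y \<Longrightarrow> hs_norm r (x - y) = norm (to_l2 r x - to_l2 r y)"
  by (simp add: hs_norm_eq_norm_to_l2 in_Hs_diff to_l2_diff)

lemma hs_norm_scale: "in_Hs r x \<Longrightarrow> hs_norm r (\<lambda>j. c * x j) = \<bar>c\<bar> * hs_norm r x"
  by (simp add: hs_norm_eq_norm_to_l2 in_Hs_scale to_l2_scale)

lemma hs_norm_diff_self [simp]: "hs_norm r (x - x) = 0"
  by (simp add: hs_norm_def)

lemma hs_norm_diff_le_0_imp_eq: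
  assumes "in_Hs r x" "in_Hs r y" "hs_norm r (x - y) \<le> 0"
  shows "x = y"
proof -
  have "norm (to_l2 r x - to_l2 r y) \<le> 0" using assms by (simp add: hs_norm_diff)
  then have "to_l2 r x = to_l2 r y" by simp
  then show ?thesis using assms(1,2) by (metis of_l2_to_l2)
qed

lemma cont_path_Hs_iff:
  "cont_path_Hs r T f \<longleftrightarrow> (\<forall>t\<in>{0..T}. in_Hs r (f t)) \<and> continuous_on {0..T} (\<lambda>t. to_l2 r (f t))"
proof -
  have "(\<forall>t\<in>{0..T}. \<forall>e>0. \<exists>d>0. \<forall>u\<in>{0..T}. \<bar>u - t\<bar> < d \<longrightarrow> hs_norm r (f u - f t) < e)
      \<longleftrightarrow> continuous_on {0..T} (\<lambda>t. to_l2 r (f t))" if H: "\<forall>t\<in>{0..T}. in_Hs r (f t)"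
  proof -
    have "hs_norm r (f u - f t) = dist (to_l2 r (f u)) (to_l2 r (f t))" if "u \<in> {0..T}" "t \<in> {0..T}" for u t
      using H that by (simp add: hs_norm_diff dist_norm)
    then show ?thesis unfolding continuous_on_iff dist_real_def by (auto 0 0)
  qed
  then show ?thesis unfolding cont_path_Hs_def by blast
qed

lemma hs_norm_le_sup_dist_Hs:
  assumes f: "cont_path_Hs r T f" and g: "cont_path_Hs r T g" and t: "t \<in> {0..T}"
  shows "hs_norm r (f t - g t) \<le> sup_dist_Hs r T f g"
proof -
  have fH: "\<forall>t\<in>{0..T}. in_Hs r (f t)" and fc: "continuous_on {0..T} (\<lambda>t. to_l2 r (f t))"
    and gH: "\<forall>t\<in>{0..T}. in_Hs r (g t)" and gc: "continuous_on {0..T} (\<lambda>t. to_l2 r (g t))"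
    using f g unfolding cont_path_Hs_iff by auto
  have eq: "hs_norm r (f t - g t) = norm (to_l2 r (f t) - to_l2 r (g t))" if "t \<in> {0..T}" for t
    using fH gH that by (simp add: hs_norm_diff)
  have "continuous_on {0..T} (\<lambda>t. norm (to_l2 r (f t) - to_l2 r (g t)))" by (intro continuous_intros fc gc)
  then have "bdd_above ((\<lambda>t. norm (to_l2 r (f t) - to_l2 r (g t))) ` {0..T})"
    by (intro bounded_imp_bdd_above compact_imp_bounded compact_continuous_image compact_Icc)
  then have "bdd_above ((\<lambda>t. hs_norm r (f t - g t)) ` {0..T})"
    using eq by (metis (no_types, lifting) image_cong)
  then show ?thesis unfolding sup_dist_Hs_def using t by (rule cSUP_upper2) simp
qed

lemma sup_dist_Hs_le:
  assumes "0 \<le> T" "\<And>t. t \<in> {0..T} \<Longrightarrow> hs_norm r (f t - g t) \<le> B"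
  shows "sup_dist_Hs r T f g \<le> B"
  unfolding sup_dist_Hs_def using assms by (intro cSUP_least) auto

section \<open>Lipschitz continuity of the gradient\<close>

lemma bounded_op_Hs_scale:
  assumes "bounded_op_Hs r K L" "in_Hs r h"
  shows "L (\<lambda>j. c * h j) = (\<lambda>j. c * L h j)"
proof -
  have "L (\<lambda>j. c * h j + 0 * h j) = (\<lambda>j. c * L h j + 0 * L h j)"
    using assms unfolding bounded_op_Hs_def by blast
  then show ?thesis by simp
qed

lemma has_derivative_gradient_along_line:
  fixes gradPsi :: "hvec \<Rightarrow> hvec" and hessPsi :: "hvec \<Rightarrow> hvec \<Rightarrow> hvec"
  assumes grad: "\<And>x. in_Hs s x \<Longrightarrow> in_Hs (-s) (gradPsi x)"
    and hess: "\<forall>x. in_Hs s x \<longrightarrow>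
          (\<forall>e>0. \<exists>d>0. \<forall>h. in_Hs s h \<and> hs_norm s h < d \<longrightarrow>
             hs_norm (-s) (gradPsi (\<lambda>j. x j + h j) - gradPsi x - hessPsi x h) \<le> e * hs_norm s h)"
    and hess_bounded: "\<And>x. in_Hs s x \<Longrightarrow> bounded_op_Hs s K (hessPsi x)"
    and x: "in_Hs s x" and d: "in_Hs s d"
  defines "z t \<equiv> (\<lambda>j. x j + t * d j)"
  shows "((\<lambda>t. to_l2 (-s) (gradPsi (z t))) has_derivative (\<lambda>\<tau>. \<tau> *\<^sub>R to_l2 (-s) (hessPsi (z t) d))) (at t)"
  unfolding has_derivative_at_alt
proof (intro conjI allI impI)
  show "bounded_linear (\<lambda>\<tau>. \<tau> *\<^sub>R to_l2 (-s) (hessPsi (z t) d))" by (rule bounded_linear_scaleR_left)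
  define N where "N = hs_norm s d"
  have N0: "0 \<le> N" unfolding N_def using d by (simp add: hs_norm_eq_norm_to_l2)
  have zH: "in_Hs s (z t')" for t' unfolding z_def using in_Hs_lincomb[OF x d, of 1 t'] by simp
  have hessH: "in_Hs (-s) (hessPsi (z t) d)"
    using hess_bounded[OF zH] d unfolding bounded_op_Hs_def by blast
  fix e :: real assume e: "e > 0"
  define e' where "e' = e / (N + 1)"
  have e': "e' > 0" and e'N: "e' * N \<le> e" unfolding e'_def using e N0 by (simp_all add: field_simps)
  obtain \<delta> where \<delta>: "\<delta> > 0" and H: "\<And>h. in_Hs s h \<Longrightarrow> hs_norm s h < \<delta> \<Longrightarrow>
      hs_norm (-s) (gradPsi (\<lambda>j. z t j + h j) - gradPsi (z t) - hessPsi (z t) h) \<le> e' * hs_norm s h"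
    using hess zH[of t] e' by blast
  show "\<exists>r>0. \<forall>y. norm (y - t) < r \<longrightarrow>
      norm (to_l2 (-s) (gradPsi (z y)) - to_l2 (-s) (gradPsi (z t)) - (y - t) *\<^sub>R to_l2 (-s) (hessPsi (z t) d))
        \<le> e * norm (y - t)"
  proof (intro exI[of _ "\<delta> / (N + 1)"] conjI allI impI)
    show "0 < \<delta> / (N + 1)" using \<delta> N0 by simp
    fix t1 assume t1: "norm (t1 - t) < \<delta> / (N + 1)"
    define h where "h = (\<lambda>j. (t1 - t) * d j)"
    have hH: "in_Hs s h" unfolding h_def using d by (rule in_Hs_scale)
    have hn: "hs_norm s h = \<bar>t1 - t\<bar> * N" unfolding h_def N_def using d by (rule hs_norm_scale)
    have "\<bar>t1 - t\<bar> * N \<le> \<bar>t1 - t\<bar> * (N + 1)" by (simp add: mult_left_mono)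
    also have "\<dots> < \<delta>" using t1 N0 by (simp add: field_simps)
    finally have hsmall: "hs_norm s h < \<delta>" using hn by simp
    have zh: "(\<lambda>j. z t j + h j) = z t1" unfolding z_def h_def by (simp add: fun_eq_iff algebra_simps)
    have hessh: "hessPsi (z t) h = (\<lambda>j. (t1 - t) * hessPsi (z t) d j)"
      unfolding h_def using hess_bounded[OF zH] d by (rule bounded_op_Hs_scale)
    have "norm (to_l2 (-s) (gradPsi (z t1)) - to_l2 (-s) (gradPsi (z t)) - (t1 - t) *\<^sub>R to_l2 (-s) (hessPsi (z t) d))
        = hs_norm (-s) (gradPsi (z t1) - gradPsi (z t) - (\<lambda>j. (t1 - t) * hessPsi (z t) d j))"
      using grad[OF zH] hessH
      by (simp add: hs_norm_eq_norm_to_l2 in_Hs_diff in_Hs_scale to_l2_diff to_l2_scale)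
    also have "\<dots> \<le> e' * (\<bar>t1 - t\<bar> * N)" using H[OF hH hsmall] by (simp add: zh hessh hn)
    also have "\<dots> \<le> e * norm (t1 - t)"
      using mult_right_mono[OF e'N abs_ge_zero[of "t1 - t"]] by (simp add: mult_ac)
    finally show "norm (to_l2 (-s) (gradPsi (z t1)) - to_l2 (-s) (gradPsi (z t))
        - (t1 - t) *\<^sub>R to_l2 (-s) (hessPsi (z t) d)) \<le> e * norm (t1 - t)" .
  qed
qed

lemma gradient_lipschitz:
  fixes gradPsi :: "hvec \<Rightarrow> hvec" and hessPsi :: "hvec \<Rightarrow> hvec \<Rightarrow> hvec"
  assumes grad: "\<And>x. in_Hs s x \<Longrightarrow> in_Hs (-s) (gradPsi x)"
    and hess: "\<forall>x. in_Hs s x \<longrightarrow>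
          (\<forall>e>0. \<exists>d>0. \<forall>h. in_Hs s h \<and> hs_norm s h < d \<longrightarrow>
             hs_norm (-s) (gradPsi (\<lambda>j. x j + h j) - gradPsi x - hessPsi x h) \<le> e * hs_norm s h)"
    and hess_bounded: "\<And>x. in_Hs s x \<Longrightarrow> bounded_op_Hs s K (hessPsi x)"
    and x: "in_Hs s x" and y: "in_Hs s y"
  shows "norm (to_l2 (-s) (gradPsi y) - to_l2 (-s) (gradPsi x)) \<le> max K 0 * hs_norm s (y - x)"
proof -
  define d where "d = y - x"
  have d: "in_Hs s d" unfolding d_def using y x by (rule in_Hs_diff)
  define z where "z t = (\<lambda>j. x j + t * d j)" for t
  have zH: "in_Hs s (z t)" for t unfolding z_def using in_Hs_lincomb[OF x d, of 1 t] by simp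
  have "onorm (\<lambda>\<tau>. \<tau> *\<^sub>R to_l2 (-s) (hessPsi (z t) d)) \<le> max K 0 * hs_norm s d" for t
  proof (rule onorm_bound)
    show "0 \<le> max K 0 * hs_norm s d" using d by (simp add: hs_norm_eq_norm_to_l2)
    have "in_Hs (-s) (hessPsi (z t) d)" "hs_norm (-s) (hessPsi (z t) d) \<le> K * hs_norm s d"
      using hess_bounded[OF zH] d unfolding bounded_op_Hs_def by blast+
    moreover have "K * hs_norm s d \<le> max K 0 * hs_norm s d"
      using d by (intro mult_right_mono) (auto simp: hs_norm_eq_norm_to_l2)
    ultimately have "norm (to_l2 (-s) (hessPsi (z t) d)) \<le> max K 0 * hs_norm s d"
      by (simp add: hs_norm_eq_norm_to_l2)
    then show "norm (\<tau> *\<^sub>R to_l2 (-s) (hessPsi (z t) d)) \<le> max K 0 * hs_norm s d * norm \<tau>" for \<tau>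
      by (simp add: mult_left_mono mult.commute)
  qed
  then have "norm (to_l2 (-s) (gradPsi (z 1)) - to_l2 (-s) (gradPsi (z 0))) \<le> max K 0 * hs_norm s d * norm (1 - 0 :: real)"
    using has_derivative_gradient_along_line[OF grad hess hess_bounded x d]
    by (intro differentiable_bound[OF convex_UNIV]) (auto simp: z_def)
  moreover have "z 1 = y" "z 0 = x" unfolding z_def d_def by (auto simp: fun_eq_iff)
  ultimately show ?thesis unfolding d_def by simp
qed

section \<open>The drift F in l2 coordinates\<close>

lemma sobolev_weight_mult_power2_le:
  fixes lam c kappa s :: real
  assumes lam: "\<bar>lam\<bar> \<le> c * real (Suc j) powr (- kappa)" and s: "s \<le> kappa"
  shows "sobolev_weight s j * lam\<^sup>2 \<le> c\<^sup>2 * sobolev_weight (-s) j"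
proof -
  have "lam\<^sup>2 \<le> (c * real (Suc j) powr (- kappa))\<^sup>2"
    using power_mono[OF lam abs_ge_zero, of 2] by simp
  also have "\<dots> = c\<^sup>2 * real (Suc j) powr (- 2 * kappa)"
    by (simp add: power_mult_distrib power2_eq_square powr_add[symmetric])
  finally have "sobolev_weight s j * lam\<^sup>2 \<le> sobolev_weight s j * (c\<^sup>2 * real (Suc j) powr (- 2 * kappa))"
    by (intro mult_left_mono) (auto simp: less_imp_le)
  also have "\<dots> = c\<^sup>2 * real (Suc j) powr (s - 2 * kappa)"
    unfolding sobolev_weight_def by (simp add: powr_add[symmetric])
  also have "\<dots> \<le> c\<^sup>2 * real (Suc j) powr (- s)"
    using s by (intro mult_left_mono powr_mono) auto
  finally show ?thesis by (simp add: sobolev_weight_def)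
qed

text \<open>\<open>cov_grad_l2\<close> and \<open>drift_l2\<close> are C grad Psi and F conjugated by \<open>to_l2 s\<close>. The sequence under
  \<open>Abs_l2\<close> is square summable only under the assumptions of \<open>lipschitz_drift\<close>; otherwise the value is junk.\<close>

definition cov_grad_l2 :: "(nat \<Rightarrow> real) \<Rightarrow> real \<Rightarrow> (hvec \<Rightarrow> hvec) \<Rightarrow> l2 \<Rightarrow> l2" where
  "cov_grad_l2 lam s gradPsi u = Abs_l2 (\<lambda>j. sobolev_weight s j * (lam j)\<^sup>2 * gradPsi (of_l2 s u) j)"

definition drift_l2 :: "(nat \<Rightarrow> real) \<Rightarrow> real \<Rightarrow> (hvec \<Rightarrow> hvec) \<Rightarrow> l2 \<Rightarrow> l2" where
  "drift_l2 lam s gradPsi u = - u - cov_grad_l2 lam s gradPsi u"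

locale lipschitz_drift =
  fixes lam :: "nat \<Rightarrow> real" and s :: real and gradPsi :: "hvec \<Rightarrow> hvec" and c Kg :: real
  assumes grad: "\<And>x. in_Hs s x \<Longrightarrow> in_Hs (-s) (gradPsi x)"
    and cov_bound: "\<And>j. sobolev_weight s j * (lam j)\<^sup>2 \<le> c * sobolev_weight (-s) j"
    and c_nonneg: "0 \<le> c" and Kg_nonneg: "0 \<le> Kg"
    and grad_lipschitz: "\<And>x y. in_Hs s x \<Longrightarrow> in_Hs s y \<Longrightarrow>
        norm (to_l2 (-s) (gradPsi y) - to_l2 (-s) (gradPsi x)) \<le> Kg * hs_norm s (y - x)"
begin

lemma abs_cov_coefficient_le: "\<bar>sobolev_weight s j * (lam j)\<^sup>2 * z\<bar> \<le> c * \<bar>sobolev_weight (-s) j * z\<bar>"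
proof -
  have "\<bar>sobolev_weight s j * (lam j)\<^sup>2 * z\<bar> = (sobolev_weight s j * (lam j)\<^sup>2) * \<bar>z\<bar>"
    by (simp add: abs_mult less_imp_le)
  also have "\<dots> \<le> (c * sobolev_weight (-s) j) * \<bar>z\<bar>" using cov_bound[of j] by (intro mult_right_mono) auto
  also have "\<dots> = c * \<bar>sobolev_weight (-s) j * z\<bar>" by (simp add: abs_mult less_imp_le)
  finally show ?thesis .
qed

lemma l2_rep_cov_grad_l2:
  "l2_rep (cov_grad_l2 lam s gradPsi u) j = sobolev_weight s j * (lam j)\<^sup>2 * gradPsi (of_l2 s u) j"
proof -
  have g: "in_Hs (-s) (gradPsi (of_l2 s u))" by (rule grad[OF in_Hs_of_l2])
  have "summable (\<lambda>j. (sobolev_weight s j * (lam j)\<^sup>2 * gradPsi (of_l2 s u) j)\<^sup>2)"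
  proof (rule summable_comparison_test'[where N=0])
    show "summable (\<lambda>j. c\<^sup>2 * (sobolev_weight (-s) j * gradPsi (of_l2 s u) j)\<^sup>2)"
      using g unfolding in_Hs_iff by (intro summable_mult)
    fix j
    have "\<bar>sobolev_weight s j * (lam j)\<^sup>2 * gradPsi (of_l2 s u) j\<bar>\<^sup>2
        \<le> (c * \<bar>sobolev_weight (-s) j * gradPsi (of_l2 s u) j\<bar>)\<^sup>2"
      by (intro power_mono abs_cov_coefficient_le) auto
    then show "norm ((sobolev_weight s j * (lam j)\<^sup>2 * gradPsi (of_l2 s u) j)\<^sup>2)
        \<le> c\<^sup>2 * (sobolev_weight (-s) j * gradPsi (of_l2 s u) j)\<^sup>2"
      by (simp add: power_mult_distrib)
  qed
  then show ?thesis unfolding cov_grad_l2_def by (simp add: Abs_l2_inverse)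
qed

lemma l2_rep_drift_l2:
  "l2_rep (drift_l2 lam s gradPsi u) j = sobolev_weight s j * F_drift lam gradPsi (of_l2 s u) j"
  using sobolev_weight_mult_of_l2[of s j u]
  unfolding drift_l2_def F_drift_def by (simp add: l2_rep_cov_grad_l2 algebra_simps)

lemma cov_grad_l2_lipschitz:
  "norm (cov_grad_l2 lam s gradPsi u - cov_grad_l2 lam s gradPsi u') \<le> c * Kg * norm (u - u')"
proof -
  let ?g = "\<lambda>u. to_l2 (-s) (gradPsi (of_l2 s u))"
  have "norm (cov_grad_l2 lam s gradPsi u - cov_grad_l2 lam s gradPsi u') \<le> c * norm (?g u - ?g u')"
  proof (rule norm_l2_le_coordinatewise[OF c_nonneg])
    fix j
    show "\<bar>l2_rep (cov_grad_l2 lam s gradPsi u - cov_grad_l2 lam s gradPsi u') j\<bar> \<le> c * \<bar>l2_rep (?g u - ?g u') j\<bar>"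
      using abs_cov_coefficient_le[of j "gradPsi (of_l2 s u) j - gradPsi (of_l2 s u') j"]
      by (simp add: l2_rep_cov_grad_l2 l2_rep_to_l2 grad in_Hs_of_l2 right_diff_distrib)
  qed
  also have "\<dots> \<le> c * (Kg * hs_norm s (of_l2 s u - of_l2 s u'))"
    using grad_lipschitz[OF in_Hs_of_l2 in_Hs_of_l2] c_nonneg by (intro mult_left_mono) auto
  also have "hs_norm s (of_l2 s u - of_l2 s u') = norm (u - u')"
    by (simp add: hs_norm_diff in_Hs_of_l2)
  finally show ?thesis by (simp add: mult.assoc)
qed

lemma drift_l2_lipschitz:
  "norm (drift_l2 lam s gradPsi u - drift_l2 lam s gradPsi u') \<le> (1 + c * Kg) * norm (u - u')"
proof -
  have "drift_l2 lam s gradPsi u - drift_l2 lam s gradPsi u'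
      = - (u - u') - (cov_grad_l2 lam s gradPsi u - cov_grad_l2 lam s gradPsi u')"
    unfolding drift_l2_def by (simp add: algebra_simps)
  also have "norm \<dots> \<le> norm (u - u') + norm (cov_grad_l2 lam s gradPsi u - cov_grad_l2 lam s gradPsi u')"
    by (metis norm_minus_cancel norm_triangle_ineq4)
  also have "\<dots> \<le> norm (u - u') + c * Kg * norm (u - u')" using cov_grad_l2_lipschitz by simp
  finally show ?thesis by (simp add: distrib_right)
qed

lemma continuous_on_drift_l2: "continuous_on UNIV (drift_l2 lam s gradPsi)"
proof -
  have "(1 + c * Kg)-lipschitz_on UNIV (drift_l2 lam s gradPsi)"
    using drift_l2_lipschitz c_nonneg Kg_nonneg by (intro lipschitz_onI) (auto simp: dist_norm)
  then show ?thesis by (rule lipschitz_on_continuous_on)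
qed

end

section \<open>The solution map J1\<close>

locale scaled_lipschitz_drift = lipschitz_drift +
  fixes D :: "real \<Rightarrow> real" and T :: real
  assumes T_pos: "0 < T" and continuous_D: "continuous_on {0..T} D"
begin

definition D_bound :: real where "D_bound = (SUP v\<in>{0..T}. \<bar>D v\<bar>)"

definition field :: "real \<Rightarrow> l2 \<Rightarrow> l2" where "field v u = D v *\<^sub>R drift_l2 lam s gradPsi u"

definition field_lip :: real where "field_lip = (D_bound + 1) * (1 + c * Kg)"

definition hs_solution :: "hvec \<Rightarrow> (real \<Rightarrow> hvec) \<Rightarrow> (real \<Rightarrow> hvec) \<Rightarrow> bool" where
  "hs_solution x0 eta y \<longleftrightarrow> cont_path_Hs s T y \<and>
     (\<forall>t\<in>{0..T}. \<forall>j. y t j = x0 j + integral {0..t} (\<lambda>v. F_drift lam gradPsi (y v) j * D v) + eta t j)"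

lemma abs_D_le_D_bound: "v \<in> {0..T} \<Longrightarrow> \<bar>D v\<bar> \<le> D_bound"
  unfolding D_bound_def
  by (rule cSUP_upper, assumption, intro bounded_imp_bdd_above compact_imp_bounded
      compact_continuous_image continuous_intros continuous_D compact_Icc)

lemma field_lip_pos: "0 < field_lip"
proof -
  have "0 \<le> D_bound" using abs_D_le_D_bound[of 0] T_pos by simp
  then show ?thesis unfolding field_lip_def using c_nonneg Kg_nonneg by (simp add: add_pos_nonneg)
qed

lemma field_lipschitz: "v \<in> {0..T} \<Longrightarrow> norm (field v u - field v u') \<le> field_lip * norm (u - u')"
proof -
  assume v: "v \<in> {0..T}"
  have "norm (field v u - field v u') = \<bar>D v\<bar> * norm (drift_l2 lam s gradPsi u - drift_l2 lam s gradPsi u')"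
    unfolding field_def by (simp add: scaleR_diff_right[symmetric])
  also have "\<dots> \<le> (D_bound + 1) * ((1 + c * Kg) * norm (u - u'))"
    using abs_D_le_D_bound[OF v] drift_l2_lipschitz by (intro mult_mono) auto
  finally show ?thesis by (simp add: field_lip_def mult.assoc)
qed

lemma continuous_on_field: "continuous_on {0..T} u \<Longrightarrow> continuous_on {0..T} (\<lambda>v. field v (u v))"
  unfolding field_def
  by (intro continuous_intros continuous_D continuous_on_compose2[OF continuous_on_drift_l2]) auto

lemma l2_rep_integral_field:
  assumes y: "cont_path_Hs s T y" and t: "t \<in> {0..T}"
  shows "l2_rep (integral {0..t} (\<lambda>v. field v (to_l2 s (y v)))) j
    = sobolev_weight s j * integral {0..t} (\<lambda>v. F_drift lam gradPsi (y v) j * D v)"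
proof -
  have yH: "\<forall>t\<in>{0..T}. in_Hs s (y t)" and yc: "continuous_on {0..T} (\<lambda>t. to_l2 s (y t))"
    using y unfolding cont_path_Hs_iff by auto
  have sub: "{0..t} \<subseteq> {0..T}" using t by auto
  have int: "(\<lambda>v. field v (to_l2 s (y v))) integrable_on {0..t}"
    using continuous_on_subset[OF continuous_on_field[OF yc] sub] by (intro integrable_continuous_interval)
  have "l2_rep (integral {0..t} (\<lambda>v. field v (to_l2 s (y v)))) j
      = integral {0..t} (\<lambda>v. l2_rep (field v (to_l2 s (y v))) j)"
    using integral_linear[OF int bounded_linear_l2_rep[of j]] by (simp add: o_def)
  also have "\<dots> = integral {0..t} (\<lambda>v. sobolev_weight s j * (F_drift lam gradPsi (y v) j * D v))"
    using yH sub by (intro integral_cong) (auto simp: field_def l2_rep_drift_l2 of_l2_to_l2)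
  finally show ?thesis by simp
qed

lemma hs_equation_iff_l2_equation:
  assumes y: "cont_path_Hs s T y" and x0: "in_Hs s x0" and et: "in_Hs s (eta t)" and t: "t \<in> {0..T}"
  shows "(\<forall>j. y t j = x0 j + integral {0..t} (\<lambda>v. F_drift lam gradPsi (y v) j * D v) + eta t j)
    \<longleftrightarrow> to_l2 s (y t) = to_l2 s x0 + integral {0..t} (\<lambda>v. field v (to_l2 s (y v))) + to_l2 s (eta t)"
proof -
  have yt: "in_Hs s (y t)" using y t unfolding cont_path_Hs_iff by auto
  have "to_l2 s (y t) = to_l2 s x0 + integral {0..t} (\<lambda>v. field v (to_l2 s (y v))) + to_l2 s (eta t)
      \<longleftrightarrow> (\<forall>j. sobolev_weight s j * y t j = sobolev_weight s j * (x0 j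
            + integral {0..t} (\<lambda>v. F_drift lam gradPsi (y v) j * D v) + eta t j))"
    using yt x0 et
    by (simp add: l2_rep_inject[symmetric] fun_eq_iff l2_rep_to_l2 l2_rep_integral_field[OF y t] distrib_left)
  then show ?thesis by (simp add: sobolev_weight_neq_0)
qed

lemma hs_solution_to_l2:
  assumes "hs_solution x0 eta y" "in_Hs s x0" "cont_path_Hs s T eta"
  shows "continuous_on {0..T} (\<lambda>t. to_l2 s (y t))"
    and "\<And>t. t \<in> {0..T} \<Longrightarrow>
      to_l2 s (y t) = to_l2 s x0 + integral {0..t} (\<lambda>v. field v (to_l2 s (y v))) + to_l2 s (eta t)"
  using assms hs_equation_iff_l2_equation unfolding hs_solution_def cont_path_Hs_iff by auto

lemma hs_solution_exists:
  assumes x0: "in_Hs s x0" and eta: "cont_path_Hs s T eta"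
  shows "\<exists>y. hs_solution x0 eta y"
proof -
  have ec: "continuous_on {0..T} (\<lambda>t. to_l2 s (eta t))" using eta unfolding cont_path_Hs_iff by auto
  obtain u where uc: "continuous_on {0..T} u"
    and ue: "\<forall>t\<in>{0..T}. u t = to_l2 s x0 + integral {0..t} (\<lambda>v. field v (u v)) + to_l2 s (eta t)"
    using integral_equation_exists[OF field_lip_pos less_imp_le[OF T_pos] field_lipschitz continuous_on_field ec]
    by blast
  define y where "y t = of_l2 s (u t)" for t
  have y: "cont_path_Hs s T y" unfolding cont_path_Hs_iff y_def using uc by (simp add: in_Hs_of_l2)
  have "hs_solution x0 eta y"
    using y ue eta hs_equation_iff_l2_equation[OF y x0] unfolding hs_solution_def cont_path_Hs_iff
    by (simp add: y_def)
  then show ?thesis by blast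
qed

lemma hs_solution_dist_le:
  assumes y1: "hs_solution x1 e1 y1" and x1: "in_Hs s x1" and e1: "cont_path_Hs s T e1"
    and y2: "hs_solution x2 e2 y2" and x2: "in_Hs s x2" and e2: "cont_path_Hs s T e2"
    and data: "\<And>t. t \<in> {0..T} \<Longrightarrow> hs_norm s (x1 - x2) + hs_norm s (e1 t - e2 t) \<le> \<delta>"
    and t: "t \<in> {0..T}"
  shows "hs_norm s (y1 t - y2 t) \<le> 2 * exp (2 * field_lip * T) * \<delta>"
proof -
  have l2_data: "norm (to_l2 s x1 - to_l2 s x2 + (to_l2 s (e1 t') - to_l2 s (e2 t'))) \<le> \<delta>"
    if t': "t' \<in> {0..T}" for t'
  proof -
    have "in_Hs s (e1 t')" "in_Hs s (e2 t')" using e1 e2 t' unfolding cont_path_Hs_iff by auto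
    then have "hs_norm s (x1 - x2) + hs_norm s (e1 t' - e2 t')
        = norm (to_l2 s x1 - to_l2 s x2) + norm (to_l2 s (e1 t') - to_l2 s (e2 t'))"
      using x1 x2 by (simp add: hs_norm_diff)
    then show ?thesis
      using norm_triangle_ineq[of "to_l2 s x1 - to_l2 s x2" "to_l2 s (e1 t') - to_l2 s (e2 t')"] data[OF t']
      by linarith
  qed
  have "norm (to_l2 s (y1 t) - to_l2 s (y2 t)) \<le> 2 * exp (2 * field_lip * T) * \<delta>"
    by (rule integral_equation_stability[OF field_lip_pos field_lipschitz continuous_on_field
          hs_solution_to_l2[OF y1 x1 e1] hs_solution_to_l2[OF y2 x2 e2] l2_data t])
  moreover have "in_Hs s (y1 t)" "in_Hs s (y2 t)"
    using y1 y2 t unfolding hs_solution_def cont_path_Hs_iff by auto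
  ultimately show ?thesis by (simp add: hs_norm_diff)
qed

end

lemma J1_solution_map:
  fixes lam :: "nat \<Rightarrow> real" and c kappa s K T :: real
    and gradPsi :: "hvec \<Rightarrow> hvec" and hessPsi :: "hvec \<Rightarrow> hvec \<Rightarrow> hvec" and D :: "real \<Rightarrow> real"
  assumes lam: "\<And>j. \<bar>lam j\<bar> \<le> c * real (Suc j) powr (- kappa)" and s: "s \<le> kappa"
    and grad: "\<And>x. in_Hs s x \<Longrightarrow> in_Hs (-s) (gradPsi x)"
    and hess: "\<forall>x. in_Hs s x \<longrightarrow>
          (\<forall>e>0. \<exists>d>0. \<forall>h. in_Hs s h \<and> hs_norm s h < d \<longrightarrow>
             hs_norm (-s) (gradPsi (\<lambda>j. x j + h j) - gradPsi x - hessPsi x h) \<le> e * hs_norm s h)"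
    and hess_bounded: "\<And>x. in_Hs s x \<Longrightarrow> bounded_op_Hs s K (hessPsi x)"
    and T: "0 < T" and D: "continuous_on {0..T} D"
  shows "\<exists>J1 :: hvec \<Rightarrow> (real \<Rightarrow> hvec) \<Rightarrow> (real \<Rightarrow> hvec).
        (\<forall>x0 eta. in_Hs s x0 \<and> cont_path_Hs s T eta \<longrightarrow>
           cont_path_Hs s T (J1 x0 eta) \<and>
           (\<forall>t\<in>{0..T}. \<forall>j. J1 x0 eta t j = x0 j
               + integral {0..t} (\<lambda>v. F_drift lam gradPsi (J1 x0 eta v) j * D v) + eta t j) \<and>
           (\<forall>y. cont_path_Hs s T y \<and>
              (\<forall>t\<in>{0..T}. \<forall>j. y t j = x0 j
                 + integral {0..t} (\<lambda>v. F_drift lam gradPsi (y v) j * D v) + eta t j)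
              \<longrightarrow> (\<forall>t\<in>{0..T}. y t = J1 x0 eta t))) \<and>
        (\<forall>x0 eta. in_Hs s x0 \<and> cont_path_Hs s T eta \<longrightarrow>
           (\<forall>e>0. \<exists>d>0. \<forall>y0 xi. in_Hs s y0 \<and> cont_path_Hs s T xi \<and>
              hs_norm s (y0 - x0) + sup_dist_Hs s T xi eta < d \<longrightarrow>
              sup_dist_Hs s T (J1 y0 xi) (J1 x0 eta) < e))"
proof -
  interpret scaled_lipschitz_drift lam s gradPsi "c\<^sup>2" "max K 0" D T
    using sobolev_weight_mult_power2_le[OF lam s] gradient_lipschitz[OF grad hess hess_bounded] grad T D
    by unfold_locales auto
  define J1 where "J1 x0 eta = (SOME y. hs_solution x0 eta y)" for x0 eta
  have J1: "hs_solution x0 eta (J1 x0 eta)" if "in_Hs s x0" "cont_path_Hs s T eta" for x0 eta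
    unfolding J1_def using hs_solution_exists[OF that] by (rule someI_ex)
  have in_Hs_J1: "in_Hs s (J1 x0 eta t)" if "in_Hs s x0" "cont_path_Hs s T eta" "t \<in> {0..T}" for x0 eta t
    using J1[OF that(1,2)] that(3) unfolding hs_solution_def cont_path_Hs_iff by blast
  have unique: "y t = J1 x0 eta t"
    if x0: "in_Hs s x0" and eta: "cont_path_Hs s T eta" and y: "hs_solution x0 eta y" and t: "t \<in> {0..T}"
    for x0 eta y t
  proof (rule hs_norm_diff_le_0_imp_eq)
    show "in_Hs s (y t)" using y t unfolding hs_solution_def cont_path_Hs_iff by blast
    show "in_Hs s (J1 x0 eta t)" using x0 eta t by (rule in_Hs_J1)
    show "hs_norm s (y t - J1 x0 eta t) \<le> 0"
      using hs_solution_dist_le[OF y x0 eta J1[OF x0 eta] x0 eta _ t, of 0] by simp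
  qed
  have continuous: "\<forall>e>0. \<exists>d>0. \<forall>y0 xi. in_Hs s y0 \<and> cont_path_Hs s T xi \<and>
      hs_norm s (y0 - x0) + sup_dist_Hs s T xi eta < d \<longrightarrow> sup_dist_Hs s T (J1 y0 xi) (J1 x0 eta) < e"
    if x0: "in_Hs s x0" and eta: "cont_path_Hs s T eta" for x0 eta
  proof (rule eps_delta_of_linear_bound[where C = "2 * exp (2 * field_lip * T)"])
    fix y0 xi assume y0: "in_Hs s y0" and xi: "cont_path_Hs s T xi"
    show "sup_dist_Hs s T (J1 y0 xi) (J1 x0 eta)
        \<le> 2 * exp (2 * field_lip * T) * (hs_norm s (y0 - x0) + sup_dist_Hs s T xi eta)"
      using T hs_solution_dist_le[OF J1[OF y0 xi] y0 xi J1[OF x0 eta] x0 eta]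
        hs_norm_le_sup_dist_Hs[OF xi eta]
      by (intro sup_dist_Hs_le) auto
  qed simp
  show ?thesis
    using J1 unique continuous unfolding hs_solution_def by (intro exI[of _ J1]) blast
qed

section \<open>The solution map J2\<close>

lemma integral_equation_lower_barrier:
  fixes z f :: "real \<Rightarrow> real"
  assumes zc: "continuous_on {0..t} z" and fi: "f integrable_on {0..t}"
    and ze: "\<And>v. v \<in> {0..t} \<Longrightarrow> z v = z 0 + integral {0..v} f"
    and start: "c \<le> z 0"
    and push: "\<And>v. v \<in> {0..t} \<Longrightarrow> z v < c \<Longrightarrow> 0 \<le> f v"
    and t: "0 \<le> t"
  shows "c \<le> z t"
proof (rule ccontr)
  assume zt: "\<not> c \<le> z t"
  define P where "P = {0..t} \<inter> z -` {c..}"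
  have "closed P" unfolding P_def by (rule continuous_closed_preimage[OF zc]) auto
  moreover have "0 \<in> P" unfolding P_def using start t by auto
  moreover have bdP: "bdd_above P" unfolding P_def by (auto intro: bdd_aboveI[of _ t])
  ultimately have "Sup P \<in> P" by (intro closed_contains_Sup) auto
  then obtain t0 where t0: "t0 = Sup P" and "t0 \<in> P" by blast
  then have t0t: "0 \<le> t0" "t0 \<le> t" and zt0: "c \<le> z t0" unfolding P_def by auto
  \<comment> \<open>after the last time t0 at which z reaches the barrier c, the integrand is nonnegative\<close>
  have f_nonneg: "0 \<le> f v" if "v \<in> {t0..t} - {t0}" for v
  proof -
    have v: "v \<in> {0..t}" "t0 < v" using that t0t by auto
    have "z v < c"
    proof (rule ccontr)
      assume "\<not> z v < c"
      then have "v \<in> P" unfolding P_def using v by auto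
      then show False using cSup_upper[OF _ bdP] v(2) t0 by fastforce
    qed
    then show ?thesis using push v by blast
  qed
  define f' where "f' v = (if v = t0 then 0 else f v)" for v
  have ft: "f integrable_on {t0..t}" by (rule integrable_on_subinterval[OF fi]) (use t0t in auto)
  have "integral {t0..t} f = integral {t0..t} f'"
    by (rule integral_spike[of "{t0}"]) (auto simp: f'_def)
  also have "0 \<le> integral {t0..t} f'"
    by (rule integral_nonneg, rule integrable_spike[OF ft, of "{t0}"]) (auto simp: f'_def f_nonneg)
  finally have "0 \<le> integral {t0..t} f" .
  moreover have "integral {0..t0} f + integral {t0..t} f = integral {0..t} f"
    using Henstock_Kurzweil_Integration.integral_combine[of 0 t0 t f] t0t fi by simp
  ultimately have "z t0 \<le> z t" using ze[of t] ze[of t0] t0t by auto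
  then show False using zt zt0 by simp
qed

lemma integral_equation_a_priori_bounds:
  fixes g y w :: "real \<Rightarrow> real"
  assumes g_le: "\<And>x. g x \<le> M" and g_pos: "\<And>x. x < 1 \<Longrightarrow> 0 < g x" and gc: "continuous_on UNIV g"
    and a: "0 \<le> a" and S0: "0 \<le> S0"
    and yc: "continuous_on {0..T} y" and wc: "continuous_on {0..T} w"
    and W: "\<And>t. t \<in> {0..T} \<Longrightarrow> \<bar>w t\<bar> \<le> W"
    and eq: "\<And>t. t \<in> {0..T} \<Longrightarrow> y t = S0 + integral {0..t} (\<lambda>v. g (y v)) + a * w t"
    and t: "t \<in> {0..T}"
  shows "- 2 * a * W \<le> y t \<and> y t \<le> S0 + \<bar>M\<bar> * T + a * W"
proof -
  have sub: "{0..t} \<subseteq> {0..T}" using t by auto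
  have fi: "(\<lambda>v. g (y v)) integrable_on {0..t}"
    using continuous_on_subset[OF continuous_on_compose2[OF gc yc] sub] by (auto intro: integrable_continuous_interval)
  have aw: "\<bar>a * w v\<bar> \<le> a * W" if "v \<in> {0..T}" for v
    using mult_left_mono[OF W[OF that] a] a by (simp add: abs_mult)
  have aW: "0 \<le> a * W" using aw[of 0] t by auto
  define z where "z v = y v - a * w v" for v
  define c where "c = min S0 (1/2 - a * W)"
  have "c \<le> z t"
  proof (rule integral_equation_lower_barrier[OF _ fi])
    show "continuous_on {0..t} z"
      unfolding z_def using sub by (intro continuous_intros continuous_on_subset[OF yc] continuous_on_subset[OF wc])
    show "z v = z 0 + integral {0..v} (\<lambda>v. g (y v))" if "v \<in> {0..t}" for v
      using eq[of v] eq[of 0] that t by (simp add: z_def)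
    show "c \<le> z 0" using eq[of 0] t by (simp add: z_def c_def)
    show "0 \<le> g (y v)" if "v \<in> {0..t}" "z v < c" for v
    proof -
      have "y v < 1" using that aw[of v] sub unfolding z_def c_def by auto
      then show ?thesis using g_pos less_imp_le by blast
    qed
  qed (use t in auto)
  then have lower: "- 2 * a * W \<le> y t" using aw[OF t] aW S0 unfolding z_def c_def by auto
  have "integral {0..t} (\<lambda>v. g (y v)) \<le> integral {0..t} (\<lambda>_. M)"
    using fi g_le by (intro integral_le) auto
  also have "\<dots> = t * M" using t by simp
  also have "\<dots> \<le> t * \<bar>M\<bar>" using t by (intro mult_left_mono) auto
  also have "\<dots> \<le> \<bar>M\<bar> * T" using t by (auto simp: mult.commute intro: mult_right_mono)
  finally show ?thesis using lower eq[OF t] aw[OF t] by auto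
qed

definition sym_clamp :: "real \<Rightarrow> real \<Rightarrow> real" where
  "sym_clamp R x = max (- R) (min R x)"

lemma sym_clamp_lipschitz: "\<bar>sym_clamp R x - sym_clamp R y\<bar> \<le> \<bar>x - y\<bar>"
  unfolding sym_clamp_def by (auto simp: max_def min_def abs_if)

lemma abs_sym_clamp_le: "0 \<le> R \<Longrightarrow> \<bar>sym_clamp R x\<bar> \<le> R"
  unfolding sym_clamp_def by (simp add: abs_le_iff max_def min_def)

lemma sym_clamp_eq_self: "\<bar>x\<bar> \<le> R \<Longrightarrow> sym_clamp R x = x"
  unfolding sym_clamp_def by (simp add: abs_le_iff max_def min_def)

lemma sym_clamp_less_1: "1 \<le> R \<Longrightarrow> x < 1 \<Longrightarrow> sym_clamp R x < 1"
  unfolding sym_clamp_def by (simp add: max_def min_def)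

lemma sup_dist_R_ge:
  assumes "continuous_on {0..T} f" "continuous_on {0..T} g" "t \<in> {0..T}"
  shows "\<bar>f t - g t\<bar> \<le> sup_dist_R T f g"
proof -
  have "continuous_on {0..T} (\<lambda>t. \<bar>f t - g t\<bar>)" by (intro continuous_intros assms)
  then have "bdd_above ((\<lambda>t. \<bar>f t - g t\<bar>) ` {0..T})"
    by (intro bounded_imp_bdd_above compact_imp_bounded compact_continuous_image compact_Icc)
  then show ?thesis unfolding sup_dist_R_def using assms(3) by (rule cSUP_upper2) simp
qed

lemma sup_dist_R_le:
  assumes "0 \<le> T" "\<And>t. t \<in> {0..T} \<Longrightarrow> \<bar>f t - g t\<bar> \<le> B"
  shows "sup_dist_R T f g \<le> B"
  unfolding sup_dist_R_def using assms by (intro cSUP_least) auto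

locale truncatable_equation =
  fixes f :: "real \<Rightarrow> real" and M K T a :: real
  assumes T_pos: "0 < T" and a_nonneg: "0 \<le> a"
    and f_le: "\<And>x. f x \<le> M" and f_pos: "\<And>x. x < 1 \<Longrightarrow> 0 < f x"
    and f_lip: "\<And>x y. \<bar>f x - f y\<bar> \<le> K * (1 + \<bar>x\<bar>) * \<bar>x - y\<bar>"
begin

definition solves :: "(real \<Rightarrow> real) \<Rightarrow> real \<Rightarrow> (real \<Rightarrow> real) \<Rightarrow> (real \<Rightarrow> real) \<Rightarrow> bool" where
  "solves g S0 w y \<longleftrightarrow> continuous_on {0..T} y \<and>
     (\<forall>t\<in>{0..T}. y t = S0 + integral {0..t} (\<lambda>v. g (y v)) + a * w t)"

definition truncated :: "real \<Rightarrow> real \<Rightarrow> real" where "truncated R x = f (sym_clamp R x)"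

definition truncated_lip :: "real \<Rightarrow> real" where "truncated_lip R = max K 0 * (1 + R) + 1"

definition a_priori_bound :: "real \<Rightarrow> real \<Rightarrow> real" where
  "a_priori_bound S0 W = S0 + \<bar>M\<bar> * T + 2 * a * W"

lemma truncated_lip_pos: "0 \<le> R \<Longrightarrow> 0 < truncated_lip R"
  unfolding truncated_lip_def by (simp add: add_nonneg_pos)

lemma truncated_lipschitz:
  assumes R: "0 \<le> R"
  shows "\<bar>truncated R x - truncated R y\<bar> \<le> truncated_lip R * \<bar>x - y\<bar>"
proof -
  have "\<bar>truncated R x - truncated R y\<bar> \<le> K * (1 + \<bar>sym_clamp R x\<bar>) * \<bar>sym_clamp R x - sym_clamp R y\<bar>"
    unfolding truncated_def by (rule f_lip)
  also have "\<dots> \<le> max K 0 * (1 + \<bar>sym_clamp R x\<bar>) * \<bar>sym_clamp R x - sym_clamp R y\<bar>"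
    by (intro mult_right_mono) auto
  also have "\<dots> \<le> (max K 0 * (1 + R)) * \<bar>x - y\<bar>"
    using abs_sym_clamp_le[OF R, of x] sym_clamp_lipschitz[of R x y]
    by (intro mult_mono) (auto intro!: mult_left_mono)
  also have "\<dots> \<le> truncated_lip R * \<bar>x - y\<bar>" unfolding truncated_lip_def by (simp add: distrib_right)
  finally show ?thesis .
qed

lemma continuous_on_truncated: "0 \<le> R \<Longrightarrow> continuous_on UNIV (truncated R)"
  using truncated_lipschitz less_imp_le[OF truncated_lip_pos]
  by (intro lipschitz_on_continuous_on[of "truncated_lip R"] lipschitz_onI) (auto simp: dist_real_def)

lemma solves_truncated_iff:
  assumes "\<forall>t\<in>{0..T}. \<bar>y t\<bar> \<le> R"
  shows "solves f S0 w y \<longleftrightarrow> solves (truncated R) S0 w y"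
proof -
  have "integral {0..t} (\<lambda>v. f (y v)) = integral {0..t} (\<lambda>v. truncated R (y v))" if "t \<in> {0..T}" for t
    using assms that by (intro integral_cong) (auto simp: truncated_def sym_clamp_eq_self)
  then show ?thesis unfolding solves_def by auto
qed

lemma truncated_solution_bound:
  assumes R: "1 \<le> R" and S0: "0 \<le> S0" and wc: "continuous_on {0..T} w"
    and W: "\<And>t. t \<in> {0..T} \<Longrightarrow> \<bar>w t\<bar> \<le> W"
    and y: "solves (truncated R) S0 w y" and t: "t \<in> {0..T}"
  shows "\<bar>y t\<bar> \<le> a_priori_bound S0 W"
proof -
  have "- 2 * a * W \<le> y t \<and> y t \<le> S0 + \<bar>M\<bar> * T + a * W"
  proof (rule integral_equation_a_priori_bounds[OF _ _ continuous_on_truncated a_nonneg S0 _ wc W _ t])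
    show "truncated R x \<le> M" for x unfolding truncated_def by (rule f_le)
    show "0 < truncated R x" if "x < 1" for x
      unfolding truncated_def using f_pos sym_clamp_less_1[OF R that] by blast
  qed (use R y in \<open>auto simp: solves_def\<close>)
  moreover have "0 \<le> a * W" using a_nonneg W[of 0] T_pos by (simp add: order_trans[OF abs_ge_zero])
  moreover have "0 \<le> \<bar>M\<bar> * T" using T_pos by simp
  ultimately show ?thesis unfolding a_priori_bound_def using S0 by (simp add: abs_le_iff)
qed

lemma solution_bound:
  assumes S0: "0 \<le> S0" and wc: "continuous_on {0..T} w"
    and W: "\<And>t. t \<in> {0..T} \<Longrightarrow> \<bar>w t\<bar> \<le> W" and y: "solves f S0 w y"
  shows "\<forall>t\<in>{0..T}. \<bar>y t\<bar> \<le> a_priori_bound S0 W"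
proof -
  have "bounded (y ` {0..T})"
    using y unfolding solves_def by (intro compact_imp_bounded compact_continuous_image compact_Icc) auto
  then obtain B where B: "\<forall>t\<in>{0..T}. \<bar>y t\<bar> \<le> max 1 B"
    unfolding bounded_iff by (force intro: le_max_iff_disj[THEN iffD2])
  then have "solves (truncated (max 1 B)) S0 w y" using y solves_truncated_iff by blast
  then show ?thesis using truncated_solution_bound[OF max.cobounded1 S0 wc W] by blast
qed

lemma solution_exists:
  assumes S0: "0 \<le> S0" and wc: "continuous_on {0..T} w"
  shows "\<exists>y. solves f S0 w y"
proof -
  obtain W where W: "\<And>t. t \<in> {0..T} \<Longrightarrow> \<bar>w t\<bar> \<le> W"
    using compact_imp_bounded[OF compact_continuous_image[OF wc compact_Icc]] unfolding bounded_iff by force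
  then have W0: "0 \<le> W" using T_pos by (meson abs_ge_zero atLeastAtMost_iff less_imp_le order.trans order_refl)
  define R where "R = a_priori_bound S0 W + 1"
  have R: "1 \<le> R" unfolding R_def a_priori_bound_def using S0 W0 T_pos a_nonneg by simp
  have "\<exists>y. continuous_on {0..T} y \<and>
      (\<forall>t\<in>{0..T}. y t = S0 + integral {0..t} (\<lambda>v. truncated R (y v)) + a * w t)"
    using truncated_lipschitz[of R] continuous_on_truncated[of R] R T_pos wc
    by (intro integral_equation_exists[where g = "\<lambda>v. truncated R" and L = "truncated_lip R", OF truncated_lip_pos])
      (auto intro: continuous_intros continuous_on_compose2)
  then obtain y where y: "solves (truncated R) S0 w y" unfolding solves_def by blast
  then have "\<forall>t\<in>{0..T}. \<bar>y t\<bar> \<le> R"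
    using truncated_solution_bound[OF R S0 wc W y] unfolding R_def by fastforce
  then show ?thesis using y solves_truncated_iff by blast
qed

lemma solution_dist_le:
  assumes R: "0 \<le> R"
    and y1: "solves f S1 w1 y1" and bound1: "\<forall>t\<in>{0..T}. \<bar>y1 t\<bar> \<le> R"
    and y2: "solves f S2 w2 y2" and bound2: "\<forall>t\<in>{0..T}. \<bar>y2 t\<bar> \<le> R"
    and data: "\<And>t. t \<in> {0..T} \<Longrightarrow> \<bar>S1 - S2 + (a * w1 t - a * w2 t)\<bar> \<le> \<delta>"
    and t: "t \<in> {0..T}"
  shows "\<bar>y1 t - y2 t\<bar> \<le> 2 * exp (2 * truncated_lip R * T) * \<delta>"
proof -
  have "solves (truncated R) S1 w1 y1" "solves (truncated R) S2 w2 y2"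
    using y1 y2 bound1 bound2 solves_truncated_iff by blast+
  then have c1: "continuous_on {0..T} y1" and e1: "\<And>t. t \<in> {0..T} \<Longrightarrow>
        y1 t = S1 + integral {0..t} (\<lambda>v. truncated R (y1 v)) + a * w1 t"
    and c2: "continuous_on {0..T} y2" and e2: "\<And>t. t \<in> {0..T} \<Longrightarrow>
        y2 t = S2 + integral {0..t} (\<lambda>v. truncated R (y2 v)) + a * w2 t"
    unfolding solves_def by blast+
  have gc: "continuous_on {0..T} (\<lambda>v. truncated R (u v))" if "continuous_on {0..T} u" for u
    using continuous_on_compose2[OF continuous_on_truncated[OF R] that] by simp
  show ?thesis
    using integral_equation_stability[where g = "\<lambda>v. truncated R", OF truncated_lip_pos[OF R] _ gc c1 e1 c2 e2 _ t]
      truncated_lipschitz[OF R] data by simp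
qed

end

context truncatable_equation
begin

definition solution :: "real \<Rightarrow> (real \<Rightarrow> real) \<Rightarrow> (real \<Rightarrow> real)" where
  "solution S0 w = (SOME y. solves f S0 w y)"

definition sup_abs :: "(real \<Rightarrow> real) \<Rightarrow> real" where "sup_abs w = sup_dist_R T w (\<lambda>_. 0)"

lemma abs_le_sup_abs: "continuous_on {0..T} w \<Longrightarrow> t \<in> {0..T} \<Longrightarrow> \<bar>w t\<bar> \<le> sup_abs w"
  using sup_dist_R_ge[of T w "\<lambda>_. 0" t] unfolding sup_abs_def by simp

lemma sup_abs_nonneg: "continuous_on {0..T} w \<Longrightarrow> 0 \<le> sup_abs w"
  using abs_le_sup_abs[of w 0] T_pos by (simp add: order_trans[OF abs_ge_zero])

lemma a_priori_bound_mono: "S \<le> S' \<Longrightarrow> W \<le> W' \<Longrightarrow> a_priori_bound S W \<le> a_priori_bound S' W'"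
  unfolding a_priori_bound_def using mult_left_mono[of W W' "2 * a"] a_nonneg by auto

lemma a_priori_bound_nonneg: "0 \<le> S \<Longrightarrow> 0 \<le> W \<Longrightarrow> 0 \<le> a_priori_bound S W"
  unfolding a_priori_bound_def using a_nonneg T_pos by simp

lemma solves_solution: "0 \<le> S0 \<Longrightarrow> continuous_on {0..T} w \<Longrightarrow> solves f S0 w (solution S0 w)"
  unfolding solution_def using solution_exists by (rule someI_ex)

lemma solution_unique:
  assumes S0: "0 \<le> S0" and wc: "continuous_on {0..T} w" and y: "solves f S0 w y" and t: "t \<in> {0..T}"
  shows "y t = solution S0 w t"
proof -
  let ?R = "a_priori_bound S0 (sup_abs w)"
  have "\<bar>y t - solution S0 w t\<bar> \<le> 2 * exp (2 * truncated_lip ?R * T) * 0"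
    using a_priori_bound_nonneg[OF S0 sup_abs_nonneg[OF wc]] abs_le_sup_abs[OF wc]
    by (intro solution_dist_le[OF _ y solution_bound[OF S0 wc _ y] solves_solution[OF S0 wc]
          solution_bound[OF S0 wc _ solves_solution[OF S0 wc]] _ t]) auto
  then show ?thesis by simp
qed

lemma sup_dist_solution_le:
  assumes S0: "0 \<le> S0" and wc: "continuous_on {0..T} w"
  obtains C where "0 < C" and "\<And>R0 u. 0 \<le> R0 \<Longrightarrow> continuous_on {0..T} u \<Longrightarrow>
    \<bar>R0 - S0\<bar> + sup_dist_R T u w < 1 \<Longrightarrow>
    sup_dist_R T (solution R0 u) (solution S0 w) \<le> C * (\<bar>R0 - S0\<bar> + sup_dist_R T u w)"
proof
  define R where "R = a_priori_bound (S0 + 1) (sup_abs w + 1)"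
  have R: "0 \<le> R" unfolding R_def using S0 sup_abs_nonneg[OF wc] by (intro a_priori_bound_nonneg) auto
  show "0 < 2 * exp (2 * truncated_lip R * T) * max 1 a" by simp
  fix R0 u assume R0: "0 \<le> R0" and uc: "continuous_on {0..T} u"
    and close: "\<bar>R0 - S0\<bar> + sup_dist_R T u w < 1"
  have uw: "\<bar>u t - w t\<bar> \<le> sup_dist_R T u w" if "t \<in> {0..T}" for t using sup_dist_R_ge[OF uc wc that] .
  have "0 \<le> sup_dist_R T u w" using uw[of 0] T_pos by (simp add: order_trans[OF abs_ge_zero])
  then have R0_le: "R0 \<le> S0 + 1" and uw1: "sup_dist_R T u w \<le> 1" using close by auto
  have u_le: "\<bar>u t\<bar> \<le> sup_abs w + 1" if "t \<in> {0..T}" for t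
    using uw[OF that] abs_le_sup_abs[OF wc that] uw1 by linarith
  have bound1: "\<forall>t\<in>{0..T}. \<bar>solution R0 u t\<bar> \<le> R"
    using solution_bound[OF R0 uc u_le solves_solution[OF R0 uc]]
      a_priori_bound_mono[OF R0_le order_refl[of "sup_abs w + 1"]] unfolding R_def by fastforce
  have bound2: "\<forall>t\<in>{0..T}. \<bar>solution S0 w t\<bar> \<le> R"
    using solution_bound[OF S0 wc abs_le_sup_abs[OF wc] solves_solution[OF S0 wc]]
      a_priori_bound_mono[of S0 "S0 + 1" "sup_abs w" "sup_abs w + 1"] unfolding R_def by fastforce
  have data: "\<bar>R0 - S0 + (a * u t - a * w t)\<bar> \<le> max 1 a * (\<bar>R0 - S0\<bar> + sup_dist_R T u w)"
    if t: "t \<in> {0..T}" for t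
  proof -
    have "\<bar>a * u t - a * w t\<bar> = a * \<bar>u t - w t\<bar>"
      using a_nonneg by (simp add: abs_mult right_diff_distrib[symmetric])
    then have "\<bar>R0 - S0 + (a * u t - a * w t)\<bar> \<le> \<bar>R0 - S0\<bar> + a * \<bar>u t - w t\<bar>"
      using abs_triangle_ineq[of "R0 - S0" "a * u t - a * w t"] by linarith
    also have "\<dots> \<le> max 1 a * \<bar>R0 - S0\<bar> + max 1 a * sup_dist_R T u w"
      using mult_right_mono[of 1 "max 1 a" "\<bar>R0 - S0\<bar>"] uw[OF t] a_nonneg \<open>0 \<le> sup_dist_R T u w\<close>
      by (intro add_mono mult_mono) auto
    finally show ?thesis by (simp add: distrib_left)
  qed
  show "sup_dist_R T (solution R0 u) (solution S0 w)
      \<le> 2 * exp (2 * truncated_lip R * T) * max 1 a * (\<bar>R0 - S0\<bar> + sup_dist_R T u w)"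
    using solution_dist_le[OF R solves_solution[OF R0 uc] bound1 solves_solution[OF S0 wc] bound2 data]
      T_pos by (intro sup_dist_R_le) (auto simp: mult.assoc)
qed

lemma J2_solution_map:
  "\<exists>J2 :: real \<Rightarrow> (real \<Rightarrow> real) \<Rightarrow> (real \<Rightarrow> real).
      (\<forall>S0 w. S0 \<ge> 0 \<and> continuous_on {0..T} w \<longrightarrow>
         continuous_on {0..T} (J2 S0 w) \<and>
         (\<forall>t\<in>{0..T}. J2 S0 w t = S0 + integral {0..t} (\<lambda>v. f (J2 S0 w v)) + a * w t) \<and>
         (\<forall>y. continuous_on {0..T} y \<and>
            (\<forall>t\<in>{0..T}. y t = S0 + integral {0..t} (\<lambda>v. f (y v)) + a * w t)
            \<longrightarrow> (\<forall>t\<in>{0..T}. y t = J2 S0 w t))) \<and>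
      (\<forall>S0 w. S0 \<ge> 0 \<and> continuous_on {0..T} w \<longrightarrow>
         (\<forall>e>0. \<exists>d>0. \<forall>R0 u. R0 \<ge> 0 \<and> continuous_on {0..T} u \<and>
            \<bar>R0 - S0\<bar> + sup_dist_R T u w < d \<longrightarrow>
            sup_dist_R T (J2 R0 u) (J2 S0 w) < e))"
proof -
  have solution: "\<forall>S0 w. S0 \<ge> 0 \<and> continuous_on {0..T} w \<longrightarrow>
      continuous_on {0..T} (solution S0 w) \<and>
      (\<forall>t\<in>{0..T}. solution S0 w t = S0 + integral {0..t} (\<lambda>v. f (solution S0 w v)) + a * w t) \<and>
      (\<forall>y. continuous_on {0..T} y \<and> (\<forall>t\<in>{0..T}. y t = S0 + integral {0..t} (\<lambda>v. f (y v)) + a * w t)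
         \<longrightarrow> (\<forall>t\<in>{0..T}. y t = solution S0 w t))"
  proof (intro allI impI)
    fix S0 :: real and w :: "real \<Rightarrow> real" assume "S0 \<ge> 0 \<and> continuous_on {0..T} w"
    then have S0: "0 \<le> S0" and wc: "continuous_on {0..T} w" by auto
    show "continuous_on {0..T} (solution S0 w) \<and>
      (\<forall>t\<in>{0..T}. solution S0 w t = S0 + integral {0..t} (\<lambda>v. f (solution S0 w v)) + a * w t) \<and>
      (\<forall>y. continuous_on {0..T} y \<and> (\<forall>t\<in>{0..T}. y t = S0 + integral {0..t} (\<lambda>v. f (y v)) + a * w t)
         \<longrightarrow> (\<forall>t\<in>{0..T}. y t = solution S0 w t))"
      using solves_solution[OF S0 wc] solution_unique[OF S0 wc] unfolding solves_def by blast
  qed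
  have continuity: "\<forall>S0 w. S0 \<ge> 0 \<and> continuous_on {0..T} w \<longrightarrow>
      (\<forall>e>0. \<exists>d>0. \<forall>R0 u. R0 \<ge> 0 \<and> continuous_on {0..T} u \<and>
        \<bar>R0 - S0\<bar> + sup_dist_R T u w < d \<longrightarrow> sup_dist_R T (solution R0 u) (solution S0 w) < e)"
  proof (intro allI, rule impI)
    fix S0 :: real and w :: "real \<Rightarrow> real" assume "S0 \<ge> 0 \<and> continuous_on {0..T} w"
    then obtain C where "0 < C" and "\<And>R0 u. 0 \<le> R0 \<Longrightarrow> continuous_on {0..T} u \<Longrightarrow>
        \<bar>R0 - S0\<bar> + sup_dist_R T u w < 1 \<Longrightarrow>
        sup_dist_R T (solution R0 u) (solution S0 w) \<le> C * (\<bar>R0 - S0\<bar> + sup_dist_R T u w)"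
      using sup_dist_solution_le by blast
    then show "\<forall>e>0. \<exists>d>0. \<forall>R0 u. R0 \<ge> 0 \<and> continuous_on {0..T} u \<and>
        \<bar>R0 - S0\<bar> + sup_dist_R T u w < d \<longrightarrow> sup_dist_R T (solution R0 u) (solution S0 w) < e"
      by (intro eps_delta_of_linear_bound) auto
  qed
  show ?thesis by (rule exI[of _ solution], rule conjI[OF solution continuity])
qed

end

lemma A_l_extension_bounded_above:
  fixes g :: "real \<Rightarrow> real"
  assumes lip: "\<forall>x y. \<bar>g x - g y\<bar> \<le> K * (1 + \<bar>x\<bar>) * \<bar>x - y\<bar>"
    and ext: "\<forall>x\<ge>0. g x = A_l l x" and one: "\<forall>x\<le>-1/2. g x = 1"
  shows "\<exists>M. \<forall>x. g x \<le> M"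
proof (intro exI allI)
  fix x :: real
  consider "x \<le> -1/2" | "-1/2 < x" "x < 1/2" | "1/2 \<le> x" by linarith
  then show "g x \<le> max 1 (max (g 0 + max K 0 * 2) (2 * l\<^sup>2))"
  proof cases
    case 1 then show ?thesis using one by simp
  next
    case 2
    have "\<bar>g x - g 0\<bar> \<le> K * (1 + \<bar>x\<bar>) * \<bar>x\<bar>" using lip by (metis diff_zero)
    also have "\<dots> \<le> max K 0 * (1 + \<bar>x\<bar>) * \<bar>x\<bar>" by (intro mult_right_mono) auto
    also have "\<dots> \<le> max K 0 * 2 * 1" using 2 by (intro mult_mono) (auto intro!: mult_left_mono)
    finally show ?thesis by simp
  next
    case 3 then show ?thesis using ext A_l_le[of x l] by simp
  qed
qed

theorem theorem4p6:
  fixes lam :: "nat \<Rightarrow> real" and kappa s :: real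
    and Psi :: "hvec \<Rightarrow> real" and gradPsi :: "hvec \<Rightarrow> hvec" and hessPsi :: "hvec \<Rightarrow> hvec \<Rightarrow> hvec"
    and l T a :: real and S :: "real \<Rightarrow> real" and tA :: "real \<Rightarrow> real"
  assumes kappa: "kappa > 1/2"
    and lam: "\<exists>c1 c2. 0 < c1 \<and> 0 < c2 \<and> (\<forall>j. c1 * real (Suc j) powr (- kappa) \<le> lam j \<and>
                 lam j \<le> c2 * real (Suc j) powr (- kappa))"
    and s: "0 \<le> s" "s < kappa - 1/2"
    and Psi_bounds: "\<exists>K. \<forall>x. in_Hs s x \<longrightarrow> 0 \<le> Psi x \<and> Psi x \<le> K * (1 + (hs_norm s x)\<^sup>2)"
    and grad_is_deriv: "\<forall>x. in_Hs s x \<longrightarrow> in_Hs (-s) (gradPsi x) \<and>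
          (\<forall>e>0. \<exists>d>0. \<forall>h. in_Hs s h \<and> hs_norm s h < d \<longrightarrow>
             \<bar>Psi (\<lambda>j. x j + h j) - Psi x - pairing (gradPsi x) h\<bar> \<le> e * hs_norm s h)"
    and hess_is_deriv: "\<forall>x. in_Hs s x \<longrightarrow>
          (\<forall>e>0. \<exists>d>0. \<forall>h. in_Hs s h \<and> hs_norm s h < d \<longrightarrow>
             hs_norm (-s) (gradPsi (\<lambda>j. x j + h j) - gradPsi x - hessPsi x h) \<le> e * hs_norm s h)"
    and grad_bound: "\<exists>K. \<forall>x. in_Hs s x \<longrightarrow> hs_norm (-s) (gradPsi x) \<le> K * (1 + hs_norm s x)"
    and hess_bound: "\<exists>K. \<forall>x. in_Hs s x \<longrightarrow> bounded_op_Hs s K (hessPsi x)"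
    and l: "l > 0" and T: "T > 0" and a: "a \<ge> 0"
    and S_nonneg: "\<forall>t\<in>{0..T}. S t \<ge> 0"
    and S_ode: "\<forall>t\<in>{0..T}. (S has_real_derivative A_l l (S t)) (at t within {0..T})"
    and tA_ext: "\<forall>x\<ge>0. tA x = A_l l x"
    and tA_one: "\<forall>x\<le>-1/2. tA x = 1"
    and tA_smooth: "\<forall>x\<in>{-1/2<..<0}. \<forall>n. ((deriv ^^ n) tA) differentiable (at x)"
    and tA_pos: "\<forall>x<1. tA x > 0"
    and tA_lip: "\<exists>K. \<forall>x y. \<bar>tA x - tA y\<bar> \<le> K * (1 + \<bar>x\<bar>) * \<bar>x - y\<bar>"
  shows
    "(\<exists>J1 :: hvec \<Rightarrow> (real \<Rightarrow> hvec) \<Rightarrow> (real \<Rightarrow> hvec).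
        (\<forall>x0 eta. in_Hs s x0 \<and> cont_path_Hs s T eta \<longrightarrow>
           cont_path_Hs s T (J1 x0 eta) \<and>
           (\<forall>t\<in>{0..T}. \<forall>j. J1 x0 eta t j = x0 j
               + integral {0..t} (\<lambda>v. F_drift lam gradPsi (J1 x0 eta v) j * D_l l (S v)) + eta t j) \<and>
           (\<forall>y. cont_path_Hs s T y \<and>
              (\<forall>t\<in>{0..T}. \<forall>j. y t j = x0 j
                 + integral {0..t} (\<lambda>v. F_drift lam gradPsi (y v) j * D_l l (S v)) + eta t j)
              \<longrightarrow> (\<forall>t\<in>{0..T}. y t = J1 x0 eta t))) \<and>
        (\<forall>x0 eta. in_Hs s x0 \<and> cont_path_Hs s T eta \<longrightarrow>
           (\<forall>e>0. \<exists>d>0. \<forall>y0 xi. in_Hs s y0 \<and> cont_path_Hs s T xi \<and>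
              hs_norm s (y0 - x0) + sup_dist_Hs s T xi eta < d \<longrightarrow>
              sup_dist_Hs s T (J1 y0 xi) (J1 x0 eta) < e))) \<and>
     (\<exists>J2 :: real \<Rightarrow> (real \<Rightarrow> real) \<Rightarrow> (real \<Rightarrow> real).
        (\<forall>S0 w. S0 \<ge> 0 \<and> continuous_on {0..T} w \<longrightarrow>
           continuous_on {0..T} (J2 S0 w) \<and>
           (\<forall>t\<in>{0..T}. J2 S0 w t = S0 + integral {0..t} (\<lambda>v. tA (J2 S0 w v)) + a * w t) \<and>
           (\<forall>y. continuous_on {0..T} y \<and>
              (\<forall>t\<in>{0..T}. y t = S0 + integral {0..t} (\<lambda>v. tA (y v)) + a * w t)
              \<longrightarrow> (\<forall>t\<in>{0..T}. y t = J2 S0 w t))) \<and>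
        (\<forall>S0 w. S0 \<ge> 0 \<and> continuous_on {0..T} w \<longrightarrow>
           (\<forall>e>0. \<exists>d>0. \<forall>R0 u. R0 \<ge> 0 \<and> continuous_on {0..T} u \<and>
              \<bar>R0 - S0\<bar> + sup_dist_R T u w < d \<longrightarrow>
              sup_dist_R T (J2 R0 u) (J2 S0 w) < e)))"
proof -
  obtain c1 c2 where c1: "0 < c1"
    and lam_bounds: "\<And>j. c1 * real (Suc j) powr (- kappa) \<le> lam j \<and> lam j \<le> c2 * real (Suc j) powr (- kappa)"
    using lam by blast
  have abs_lam: "\<bar>lam j\<bar> \<le> c2 * real (Suc j) powr (- kappa)" for j
  proof -
    have "0 \<le> c1 * real (Suc j) powr (- kappa)" using c1 by simp
    then show ?thesis using lam_bounds[of j] by (simp add: abs_le_iff)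
  qed
  have "continuous_on {0..T} S" using S_ode by (intro DERIV_continuous_on) auto
  then have D: "continuous_on {0..T} (\<lambda>v. D_l l (S v))"
    using S_nonneg by (intro continuous_on_compose2[OF continuous_on_D_l[OF l]]) auto
  obtain K where hess: "\<And>x. in_Hs s x \<Longrightarrow> bounded_op_Hs s K (hessPsi x)" using hess_bound by blast
  have grad: "\<And>x. in_Hs s x \<Longrightarrow> in_Hs (-s) (gradPsi x)" using grad_is_deriv by blast
  obtain K' where tA_lip': "\<forall>x y. \<bar>tA x - tA y\<bar> \<le> K' * (1 + \<bar>x\<bar>) * \<bar>x - y\<bar>" using tA_lip by blast
  then obtain M where "\<And>x. tA x \<le> M" using A_l_extension_bounded_above tA_ext tA_one by metis
  then interpret truncatable_equation tA M K' T a
    using T a tA_pos tA_lip' by unfold_locales auto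
  show ?thesis
    using J1_solution_map[OF abs_lam _ grad hess_is_deriv hess T D] s J2_solution_map by simp
qed


end
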